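(* Let $(\mathcal{A},\Gamma^+,\alpha)$ be a finely representable C*-dynamical system with unique complete transfer action $L$, and let $(\pi,U,H)$ be a covariant representation of $(\mathcal{A},\Gamma^+,\alpha)$. Then the formula $$(\pi\times U)\Big(\sum_{x>0}a_{-x}\delta_{-x}+a_0\delta_0+\sum_{x>0}a_x\delta_x\Big)=\sum_{x>0}U_x^*\pi(a_{-x})+\pi(a_0)+\sum_{x>0}\pi(a_x)U_x$$ (sums over $x\in\Gamma^+\setminus\{0\}$) defines a representation of the Banach $*$-algebra $l_1(\Gamma,\alpha,\mathcal{A})$ on $H$, and hence a representation of the crossed product $\mathcal{A}\rtimes_\alpha\Gamma$.
   Context: $\mathcal{A}$ is a C*-algebra with identity $1$, $\Gamma$ a totally ordered abelian group with identity $0$, $\Gamma^+=\{x\in\Gamma:0\le x\}$, and $\alpha:\Gamma^+\to\mathrm{End}(\mathcal{A})$ a semigroup homomorphism into $*$-endomorphisms ($\alpha_0=\mathrm{Id}$, $\alpha_x\circ\alpha_y=\alpha_{x+y}$). The system is finely representable if there exist a Hilbert space $H$, a faithful non-degenerate representation $\pi:\mathcal{A}\to L(H)$ and a semigroup homomorphism $U:\Gamma^+\to L(H)$ with $\pi(\alpha_x(a))=U_x\pi(a)U_x^*$, $U_x^*\pi(a)U_x\in\pi(\mathcal{A})$ and $U_x\pi(a)=\pi(\alpha_x(a))U_x$. A complete transfer action is a family $\{L_x\}_{x\in\Gamma^+}$ of continuous linear positive maps on $\mathcal{A}$ with $L_{x+y}=L_y\circ L_x$, $L_x(\alpha_x(a)b)=aL_x(b)$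 and $\alpha_x(L_x(a))=\alpha_x(1)a\alpha_x(1)$; for a finely representable system it exists and is unique. $l_1(\Gamma,\alpha,\mathcal{A})$ is the set of families $\{a_g\}_{g\in\Gamma}$ in $\mathcal{A}$ with $a_x\in\mathcal{A}\alpha_x(1)$, $a_{-x}\in\alpha_x(1)\mathcal{A}$ ($x\in\Gamma^+$) and $\|a\|=\sum_g\|a_g\|<\infty$, with pointwise linear operations, involution $(a^* )_g=(a_{-g})^*$ and multiplication given for $0\le g$ by $(a\cdot b)_g=\sum_{g=x-y,\,x,y>0}a_x\alpha_{x-y}(b_{-y})+\sum_{g=y-x,\,x,y>0}L_x(a_{-x}b_y)+\sum_{g=x+y,\,x,y\ge0}a_x\alpha_x(b_y)$ and for $g<0$ by $(a\cdot b)_g=\sum_{g=x-y,\,x,y>0}\alpha_{y-x}(a_x)b_{-y}+\sum_{g=y-x,\,x,y>0}L_y(a_{-x}b_y)+\sum_{g=-x-y,\,x,y\ge0}\alpha_y(a_{-x})b_{-y}$ ($x,y\in\Gamma^+$); it is a unital Banach $*$-algebra. For $g_0\in\Gamma$ and $c\in\mathcal{A}\alpha_{g_0}(1)$ (if $g_0\ge0$) or $c\in\alpha_{-g_0}(1)\mathcal{A}$ (if $g_0<0$), $c\delta_{g_0}$ denotes the family with $c$ at index $g_0$ and $0$ elsewhere. The crossed product $\mathcal{A}\rtimes_\alpha\Gamma$ is the enveloping C*-algebra of $l_1(\Gamma,\alpha,\mathcal{A})$. A covariant representation of $(\mathcal{A},\Gamma^+,\alpha)$ is a triple $(\pi,U,H)$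 with $H$ a Hilbert space, $\pi:\mathcal{A}\to L(H)$ a non-degenerate representation and $U:\Gamma^+\to L(H)$ a semigroup homomorphism such that $U_x\pi(a)U_x^*=\pi(\alpha_x(a))$ and $U_x^*\pi(a)U_x=\pi(L_x(a))$ for all $a\in\mathcal{A}$, $x\in\Gamma^+$. *)

theory Defs
  imports "HOL-Analysis.Analysis"
begin

class complex_vector = real_vector +
  fixes scaleC :: "complex \<Rightarrow> 'a \<Rightarrow> 'a"
  assumes scaleC_add_right: "scaleC a (x + y) = scaleC a x + scaleC a y"
    and scaleC_add_left: "scaleC (a + b) x = scaleC a x + scaleC b x"
    and scaleC_scaleC: "scaleC a (scaleC b x) = scaleC (a * b) x"
    and scaleC_one: "scaleC 1 x = x"
    and scaleR_scaleC: "scaleR r x = scaleC (complex_of_real r) x"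

class complex_normed_vector = complex_vector + real_normed_vector +
  assumes norm_scaleC: "norm (scaleC a x) = cmod a * norm x"

text \<open>Unital C*-algebra (complete, normed, with C*-identity). The class
  real_normed_algebra_1 forces 1 \<noteq> 0 and norm 1 = 1.\<close>
class cstar_algebra_1 = complex_normed_vector + banach + real_normed_algebra_1 +
  fixes cstar :: "'a \<Rightarrow> 'a"
  assumes scaleC_left_mult: "scaleC c x * y = scaleC c (x * y)"
    and scaleC_right_mult: "x * scaleC c y = scaleC c (x * y)"
    and cstar_add: "cstar (x + y) = cstar x + cstar y"
    and cstar_scaleC: "cstar (scaleC c x) = scaleC (cnj c) (cstar x)"
    and cstar_mult: "cstar (x * y) = cstar y * cstar x"
    and cstar_cstar: "cstar (cstar x) = x"
    and cstar_identity: "norm (cstar x * x) = (norm x)\<^sup>2"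

text \<open>Complex Hilbert space (inner product linear in the second argument).\<close>
class chilbert_space = complex_normed_vector + banach +
  fixes cinner :: "'a \<Rightarrow> 'a \<Rightarrow> complex"
  assumes cinner_commute: "cinner x y = cnj (cinner y x)"
    and cinner_add_right: "cinner x (y + z) = cinner x y + cinner x z"
    and cinner_scaleC_right: "cinner x (scaleC c y) = c * cinner x y"
    and cinner_self: "cinner x x = complex_of_real ((norm x)\<^sup>2)"

definition bounded_op :: "('h::chilbert_space \<Rightarrow> 'h) \<Rightarrow> bool" where
  "bounded_op T \<longleftrightarrow> (\<forall>x y. T (x + y) = T x + T y) \<and> (\<forall>c x. T (scaleC c x) = scaleC c (T x))
     \<and> (\<exists>K. \<forall>x. norm (T x) \<le> K * norm x)"

definition adj :: "('h::chilbert_space \<Rightarrow> 'h) \<Rightarrow> ('h \<Rightarrow> 'h)" where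
  "adj T = (THE S. \<forall>x y. cinner (T x) y = cinner x (S y))"

definition is_rep :: "('a::cstar_algebra_1 \<Rightarrow> 'h::chilbert_space \<Rightarrow> 'h) \<Rightarrow> bool" where
  "is_rep \<pi> \<longleftrightarrow> (\<forall>a. bounded_op (\<pi> a))
     \<and> (\<forall>a b. \<pi> (a + b) = (\<lambda>h. \<pi> a h + \<pi> b h))
     \<and> (\<forall>c a. \<pi> (scaleC c a) = (\<lambda>h. scaleC c (\<pi> a h)))
     \<and> (\<forall>a b. \<pi> (a * b) = \<pi> a \<circ> \<pi> b)
     \<and> (\<forall>a. \<pi> (cstar a) = adj (\<pi> a))"

definition nondegenerate :: "('a::cstar_algebra_1 \<Rightarrow> 'h::chilbert_space \<Rightarrow> 'h) \<Rightarrow> bool" where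
  "nondegenerate \<pi> \<longleftrightarrow>
     closure {\<Sum>i\<in>I. \<pi> (a i) (h i) | I a h. finite (I :: nat set)} = UNIV"

definition semigroup_hom_op :: "('g::linordered_ab_group_add \<Rightarrow> 'h::chilbert_space \<Rightarrow> 'h) \<Rightarrow> bool" where
  "semigroup_hom_op U \<longleftrightarrow> (\<forall>x. 0 \<le> x \<longrightarrow> bounded_op (U x)) \<and> U 0 = id
     \<and> (\<forall>x y. 0 \<le> x \<longrightarrow> 0 \<le> y \<longrightarrow> U (x + y) = U x \<circ> U y)"

definition star_endo :: "('a::cstar_algebra_1 \<Rightarrow> 'a) \<Rightarrow> bool" where
  "star_endo \<phi> \<longleftrightarrow> (\<forall>a b. \<phi> (a + b) = \<phi> a + \<phi> b) \<and> (\<forall>c a. \<phi> (scaleC c a) = scaleC c (\<phi> a))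
     \<and> (\<forall>a b. \<phi> (a * b) = \<phi> a * \<phi> b) \<and> (\<forall>a. \<phi> (cstar a) = cstar (\<phi> a))"

text \<open>alpha : Gamma^+ \<rightarrow> End(A) semigroup homomorphism (values off Gamma^+ irrelevant).\<close>
definition dyn_system :: "('g::linordered_ab_group_add \<Rightarrow> 'a::cstar_algebra_1 \<Rightarrow> 'a) \<Rightarrow> bool" where
  "dyn_system \<alpha> \<longleftrightarrow> (\<forall>x. 0 \<le> x \<longrightarrow> star_endo (\<alpha> x)) \<and> \<alpha> 0 = id
     \<and> (\<forall>x y. 0 \<le> x \<longrightarrow> 0 \<le> y \<longrightarrow> \<alpha> x \<circ> \<alpha> y = \<alpha> (x + y))"

text \<open>Finely representable, with the Hilbert space given by the type 'k.  Since this
  is a hypothesis, the existential over Hilbert spaces becomes a universally quantified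
  type variable of the theorem.\<close>
definition finely_representable ::
    "'k::chilbert_space itself \<Rightarrow> ('g::linordered_ab_group_add \<Rightarrow> 'a::cstar_algebra_1 \<Rightarrow> 'a) \<Rightarrow> bool" where
  "finely_representable _ \<alpha> \<longleftrightarrow> (\<exists>(\<pi> :: 'a \<Rightarrow> 'k \<Rightarrow> 'k) U.
      is_rep \<pi> \<and> inj \<pi> \<and> nondegenerate \<pi> \<and> semigroup_hom_op U
      \<and> (\<forall>x a. 0 \<le> x \<longrightarrow>
            \<pi> (\<alpha> x a) = U x \<circ> \<pi> a \<circ> adj (U x)
          \<and> adj (U x) \<circ> \<pi> a \<circ> U x \<in> range \<pi>
          \<and> U x \<circ> \<pi> a = \<pi> (\<alpha> x a) \<circ> U x))"

definition positive_el :: "'a::cstar_algebra_1 \<Rightarrow> bool" where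
  "positive_el a \<longleftrightarrow> (\<exists>b. a = cstar b * b)"

definition complete_transfer_action ::
    "('g::linordered_ab_group_add \<Rightarrow> 'a::cstar_algebra_1 \<Rightarrow> 'a) \<Rightarrow> ('g \<Rightarrow> 'a \<Rightarrow> 'a) \<Rightarrow> bool" where
  "complete_transfer_action \<alpha> L \<longleftrightarrow>
     (\<forall>x. 0 \<le> x \<longrightarrow>
        (\<forall>a b. L x (a + b) = L x a + L x b) \<and> (\<forall>c a. L x (scaleC c a) = scaleC c (L x a))
      \<and> continuous_on UNIV (L x)
      \<and> (\<forall>a. positive_el a \<longrightarrow> positive_el (L x a))
      \<and> (\<forall>a b. L x (\<alpha> x a * b) = a * L x b)
      \<and> (\<forall>a. \<alpha> x (L x a) = \<alpha> x 1 * a * \<alpha> x 1))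
   \<and> (\<forall>x y. 0 \<le> x \<longrightarrow> 0 \<le> y \<longrightarrow> L (x + y) = L y \<circ> L x)"

definition covariant_rep ::
    "('g::linordered_ab_group_add \<Rightarrow> 'a::cstar_algebra_1 \<Rightarrow> 'a) \<Rightarrow> ('g \<Rightarrow> 'a \<Rightarrow> 'a)
     \<Rightarrow> ('a \<Rightarrow> 'h::chilbert_space \<Rightarrow> 'h) \<Rightarrow> ('g \<Rightarrow> 'h \<Rightarrow> 'h) \<Rightarrow> bool" where
  "covariant_rep \<alpha> L \<pi> U \<longleftrightarrow> is_rep \<pi> \<and> nondegenerate \<pi> \<and> semigroup_hom_op U
     \<and> (\<forall>x a. 0 \<le> x \<longrightarrow> U x \<circ> \<pi> a \<circ> adj (U x) = \<pi> (\<alpha> x a)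
                       \<and> adj (U x) \<circ> \<pi> a \<circ> U x = \<pi> (L x a))"

definition l1_set :: "('g::linordered_ab_group_add \<Rightarrow> 'a::cstar_algebra_1 \<Rightarrow> 'a) \<Rightarrow> ('g \<Rightarrow> 'a) set" where
  "l1_set \<alpha> = {f. (\<forall>x. 0 \<le> x \<longrightarrow> f x \<in> {b * \<alpha> x 1 | b. True} \<and> f (- x) \<in> {\<alpha> x 1 * b | b. True})
                 \<and> (\<lambda>g. norm (f g)) summable_on UNIV}"

definition l1_norm :: "('g \<Rightarrow> 'a::cstar_algebra_1) \<Rightarrow> real" where
  "l1_norm f = (\<Sum>\<^sub>\<infinity>g. norm (f g))"

definition l1_add :: "('g \<Rightarrow> 'a::cstar_algebra_1) \<Rightarrow> ('g \<Rightarrow> 'a) \<Rightarrow> ('g \<Rightarrow> 'a)" where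
  "l1_add f f' = (\<lambda>g. f g + f' g)"

definition l1_scale :: "complex \<Rightarrow> ('g \<Rightarrow> 'a::cstar_algebra_1) \<Rightarrow> ('g \<Rightarrow> 'a)" where
  "l1_scale c f = (\<lambda>g. scaleC c (f g))"

definition l1_star :: "('g::linordered_ab_group_add \<Rightarrow> 'a::cstar_algebra_1) \<Rightarrow> ('g \<Rightarrow> 'a)" where
  "l1_star f = (\<lambda>g. cstar (f (- g)))"

definition l1_mult ::
    "('g::linordered_ab_group_add \<Rightarrow> 'a::cstar_algebra_1 \<Rightarrow> 'a) \<Rightarrow> ('g \<Rightarrow> 'a \<Rightarrow> 'a)
     \<Rightarrow> ('g \<Rightarrow> 'a) \<Rightarrow> ('g \<Rightarrow> 'a) \<Rightarrow> ('g \<Rightarrow> 'a)" where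
  "l1_mult \<alpha> L a b = (\<lambda>g.
     if 0 \<le> g then
       (\<Sum>\<^sub>\<infinity>(x, y)\<in>{(x, y). 0 < x \<and> 0 < y \<and> g = x - y}. a x * \<alpha> (x - y) (b (- y)))
     + (\<Sum>\<^sub>\<infinity>(x, y)\<in>{(x, y). 0 < x \<and> 0 < y \<and> g = y - x}. L x (a (- x) * b y))
     + (\<Sum>\<^sub>\<infinity>(x, y)\<in>{(x, y). 0 \<le> x \<and> 0 \<le> y \<and> g = x + y}. a x * \<alpha> x (b y))
     else
       (\<Sum>\<^sub>\<infinity>(x, y)\<in>{(x, y). 0 < x \<and> 0 < y \<and> g = x - y}. \<alpha> (y - x) (a x) * b (- y))
     + (\<Sum>\<^sub>\<infinity>(x, y)\<in>{(x, y). 0 < x \<and> 0 < y \<and> g = y - x}. L y (a (- x) * b y))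
     + (\<Sum>\<^sub>\<infinity>(x, y)\<in>{(x, y). 0 \<le> x \<and> 0 \<le> y \<and> g = - x - y}. \<alpha> y (a (- x)) * b (- y)))"

definition integrated_form ::
    "('a::cstar_algebra_1 \<Rightarrow> 'h::chilbert_space \<Rightarrow> 'h) \<Rightarrow> ('g::linordered_ab_group_add \<Rightarrow> 'h \<Rightarrow> 'h)
     \<Rightarrow> ('g \<Rightarrow> 'a) \<Rightarrow> 'h \<Rightarrow> 'h" where
  "integrated_form \<pi> U f h =
     (\<Sum>\<^sub>\<infinity>x\<in>{x. 0 < x}. adj (U x) (\<pi> (f (- x)) h)) + \<pi> (f 0) h
   + (\<Sum>\<^sub>\<infinity>x\<in>{x. 0 < x}. \<pi> (f x) (U x h))"

definition l1_representation ::
    "('g::linordered_ab_group_add \<Rightarrow> 'a::cstar_algebra_1 \<Rightarrow> 'a) \<Rightarrow> ('g \<Rightarrow> 'a \<Rightarrow> 'a)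
     \<Rightarrow> (('g \<Rightarrow> 'a) \<Rightarrow> 'h::chilbert_space \<Rightarrow> 'h) \<Rightarrow> bool" where
  "l1_representation \<alpha> L \<rho> \<longleftrightarrow>
     (\<forall>f\<in>l1_set \<alpha>. bounded_op (\<rho> f))
   \<and> (\<forall>f\<in>l1_set \<alpha>. \<forall>f'\<in>l1_set \<alpha>. \<rho> (l1_add f f') = (\<lambda>h. \<rho> f h + \<rho> f' h))
   \<and> (\<forall>c. \<forall>f\<in>l1_set \<alpha>. \<rho> (l1_scale c f) = (\<lambda>h. scaleC c (\<rho> f h)))
   \<and> (\<forall>f\<in>l1_set \<alpha>. \<forall>f'\<in>l1_set \<alpha>. \<rho> (l1_mult \<alpha> L f f') = \<rho> f \<circ> \<rho> f')
   \<and> (\<forall>f\<in>l1_set \<alpha>. \<rho> (l1_star f) = adj (\<rho> f))"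

end

theory Submission
  imports Defs "HOL-Computational_Algebra.Formal_Power_Series"
begin

text \<open>
  Write \<open>f = (\<Sum>g. f\<^sub>g \<delta>\<^sub>g)\<close> and let \<open>W g c\<close> be \<open>\<pi>(c) U\<^sub>g\<close> for \<open>g \<ge> 0\<close> and \<open>U\<^sub>-\<^sub>g\<^sup>* \<pi>(c)\<close>
  for \<open>g < 0\<close>, the operator that the integrated form assigns to \<open>c \<delta>\<^sub>g\<close>. Because
  \<open>\<pi>(L\<^sub>x 1) = U\<^sub>x\<^sup>* U\<^sub>x\<close> is the initial projection of \<open>U\<^sub>x\<close> and \<open>L\<^sub>x 1\<close> is central, the
  covariance relations give \<open>U\<^sub>x \<pi>(a) = \<pi>(\<alpha>\<^sub>x a) U\<^sub>x\<close>, and from this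
  \<open>W x c \<circ> W y d = W (x + y) e\<close>, where \<open>e\<close> is the coefficient of \<open>\<delta>\<^sub>x\<^sub>+\<^sub>y\<close> in the product
  \<open>(c \<delta>\<^sub>x)(d \<delta>\<^sub>y)\<close> in \<open>l\<^sub>1\<close>; also \<open>(W g c)\<^sup>* = W (-g) c\<^sup>*\<close>. Star endomorphisms, representations
  and transfer operators are contractive, so \<open>\<parallel>W g c\<parallel> \<le> \<parallel>c\<parallel>\<close> and \<open>\<parallel>e\<parallel> \<le> \<parallel>c\<parallel> \<parallel>d\<parallel>\<close>:
  the series \<open>\<Sum>g. W g f\<^sub>g\<close> converges absolutely, and the product formula passes to it by
  summing over antidiagonals. Contractivity of star endomorphisms and representations comes
  from square roots of \<open>1 - z\<close>, \<open>\<parallel>z\<parallel> < 1\<close>, given by the binomial series; that of a transfer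
  operator \<open>T\<close> for \<open>\<phi>\<close> from \<open>\<parallel>T c\<parallel>\<^sup>2 = \<parallel>T (\<phi>(1) c\<^sup>* \<phi>(1) c)\<parallel>\<close>, iterated. Adjoints exist
  by the Riesz representation theorem.
\<close>

section \<open>Complex Hilbert spaces\<close>

global_interpretation scaleC: module "scaleC :: complex \<Rightarrow> 'a \<Rightarrow> 'a::complex_vector"
  by unfold_locales (simp_all add: scaleC_add_right scaleC_add_left scaleC_scaleC scaleC_one)

lemma bounded_linear_scaleC: "bounded_linear (scaleC c :: 'a::complex_normed_vector \<Rightarrow> 'a)"
  by (rule bounded_linear_intro[where K = "cmod c"])
     (simp_all add: scaleC_add_right scaleR_scaleC scaleC_scaleC mult.commute norm_scaleC)

lemma cinner_add_left: "cinner (x + y) z = cinner x z + cinner y z"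
  by (metis cinner_commute cinner_add_right complex_cnj_add)

lemma cinner_scaleC_left: "cinner (scaleC c x) y = cnj c * cinner x y"
  by (metis cinner_commute cinner_scaleC_right complex_cnj_mult)

lemma additive_cinner_right: "Modules.additive (cinner x)"
  by unfold_locales (rule cinner_add_right)

lemma additive_cinner_left: "Modules.additive (\<lambda>x. cinner x y)"
  by unfold_locales (rule cinner_add_left)

lemmas cinner_zero_right [simp] = Modules.additive.zero[OF additive_cinner_right]
lemmas cinner_zero_left [simp] = Modules.additive.zero[OF additive_cinner_left]
lemmas cinner_diff_right = Modules.additive.diff[OF additive_cinner_right]
lemmas cinner_diff_left = Modules.additive.diff[OF additive_cinner_left]

lemma cinner_scaleR_right: "cinner x (scaleR r y) = complex_of_real r * cinner x y"
  by (simp add: scaleR_scaleC cinner_scaleC_right)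

lemma Re_cinner_self: "Re (cinner x x) = (norm x)\<^sup>2"
  by (simp add: cinner_self)

lemma cinner_eqI: "(\<And>z. cinner z x = cinner z y) \<Longrightarrow> x = y"
  by (metis cinner_diff_right cinner_self diff_eq_diff_eq diff_self norm_eq_zero of_real_eq_0_iff
      power_eq_0_iff)

lemma norm_diff_sq: "(norm (x - y))\<^sup>2 = (norm x)\<^sup>2 + (norm y)\<^sup>2 - 2 * Re (cinner x y)"
proof -
  have "(norm (x - y))\<^sup>2 = Re (cinner (x - y) (x - y))" by (simp add: Re_cinner_self)
  also have "\<dots> = Re (cinner x x) + Re (cinner y y) - Re (cinner x y) - Re (cinner y x)"
    by (simp add: cinner_diff_left cinner_diff_right)
  also have "Re (cinner y x) = Re (cinner x y)" by (subst cinner_commute) simp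
  finally show ?thesis by (simp add: Re_cinner_self)
qed

lemma parallelogram_law:
  "(norm (x + y))\<^sup>2 + (norm (x - y))\<^sup>2 = 2 * (norm x)\<^sup>2 + 2 * (norm (y::'a::chilbert_space))\<^sup>2"
  using norm_diff_sq[of x "- y"] norm_diff_sq[of x y]
  by (simp add: Modules.additive.minus[OF additive_cinner_right])

lemma cmod_cinner_le: "cmod (cinner x y) \<le> norm x * norm y"
proof (cases "y = 0")
  case True then show ?thesis by simp
next
  case False
  then have ny: "norm y > 0" by simp
  define a where "a = cinner x y"
  define t where "t = cnj a / complex_of_real ((norm y)\<^sup>2)"
  have yx: "cinner y x = cnj a" unfolding a_def by (rule cinner_commute)
  have "cinner (x - scaleC t y) (x - scaleC t y)
        = cinner x x - t * cinner x y - cnj t * cinner y x + cnj t * t * cinner y y"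
    by (simp add: cinner_diff_left cinner_diff_right cinner_scaleC_left cinner_scaleC_right
        algebra_simps)
  also have "\<dots> = cinner x x - cnj a * a / complex_of_real ((norm y)\<^sup>2)"
    using ny unfolding t_def yx a_def[symmetric] cinner_self[of y]
    by (simp add: field_simps power2_eq_square)
  also have "cnj a * a = complex_of_real ((cmod a)\<^sup>2)"
    using complex_norm_square[of a] by (simp only: mult.commute)
  finally have "0 \<le> (norm x)\<^sup>2 - (cmod a)\<^sup>2 / (norm y)\<^sup>2"
    using Re_cinner_self[of "x - scaleC t y"] Re_cinner_self[of x]
    by (simp add: Re_divide_of_real del: of_real_power)
  then have "(cmod a)\<^sup>2 \<le> (norm x * norm y)\<^sup>2"
    using ny by (simp add: field_simps power_mult_distrib)
  then show ?thesis unfolding a_def by (rule power2_le_imp_le) simp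
qed

lemma Re_cinner_le: "Re (cinner x y) \<le> norm x * norm y"
  by (meson cmod_cinner_le complex_Re_le_cmod order_trans)

lemma norm_le_if_cinner_self_eq:
  assumes "cinner x x = cinner h k" "norm k \<le> norm h"
  shows "norm x \<le> norm h"
proof -
  have "(norm x)\<^sup>2 = Re (cinner h k)" by (simp add: Re_cinner_self flip: assms(1))
  also have "\<dots> \<le> norm h * norm k" by (rule Re_cinner_le)
  also have "\<dots> \<le> (norm h)\<^sup>2" using assms(2) by (simp add: power2_eq_square mult_left_mono)
  finally show ?thesis by (rule power2_le_imp_le) simp
qed

lemma bounded_linear_cinner_right: "bounded_linear (cinner (x::'a::chilbert_space))"
  by (rule bounded_linear_intro[where K = "norm x"])
     (simp_all add: cinner_add_right cinner_scaleR_right scaleR_conv_of_real cmod_cinner_le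
       mult.commute[of _ "norm x"])

lemma bounded_linear_cinner_left: "bounded_linear (\<lambda>y. cinner y (x::'a::chilbert_space))"
proof -
  have "cmod (cinner y x) \<le> norm y * norm x" for y by (rule cmod_cinner_le)
  then show ?thesis
    by (intro bounded_linear_intro[where K = "norm x"])
       (simp_all add: cinner_add_left scaleR_scaleC cinner_scaleC_left scaleR_conv_of_real)
qed

lemma norm_diff_sq_le_infdist:
  fixes x :: "'a::chilbert_space"
  assumes "convex C" "n \<in> C" "m \<in> C"
  shows "(norm (n - m))\<^sup>2 \<le> 2 * (norm (x - n))\<^sup>2 + 2 * (norm (x - m))\<^sup>2 - 4 * (infdist x C)\<^sup>2"
proof -
  have "(x - n) + (x - m) = scaleR 2 (x - (scaleR (1/2) n + scaleR (1/2) m))"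
    by (simp add: algebra_simps scaleR_2 flip: scaleR_add_right)
  then have "norm ((x - n) + (x - m)) = 2 * norm (x - (scaleR (1/2) n + scaleR (1/2) m))"
    by simp
  moreover have "scaleR (1/2) n + scaleR (1/2) m \<in> C"
    using assms by (intro convexD) auto
  then have "infdist x C \<le> norm (x - (scaleR (1/2) n + scaleR (1/2) m))"
    by (metis dist_norm infdist_le)
  ultimately have "(2 * infdist x C)\<^sup>2 \<le> (norm ((x - n) + (x - m)))\<^sup>2"
    by (intro power_mono) (simp_all add: infdist_nonneg)
  moreover have "norm ((x - n) - (x - m)) = norm (n - m)"
    by (simp add: norm_minus_commute)
  ultimately show ?thesis
    using parallelogram_law[of "x - n" "x - m"] by (simp add: power_mult_distrib)
qed

lemma minimizing_sequence_Cauchy: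
  fixes x :: "'a::chilbert_space"
  assumes "convex C" "\<And>k. X k \<in> C" "(\<lambda>k. norm (x - X k)) \<longlonglongrightarrow> infdist x C"
  shows "Cauchy X"
proof (rule CauchyI)
  fix e :: real assume "0 < e"
  let ?d = "infdist x C"
  have "(\<lambda>k. (norm (x - X k))\<^sup>2) \<longlonglongrightarrow> ?d\<^sup>2"
    by (intro tendsto_intros assms(3))
  moreover have "?d\<^sup>2 < ?d\<^sup>2 + e\<^sup>2 / 4" using \<open>0 < e\<close> by simp
  ultimately have "eventually (\<lambda>k. (norm (x - X k))\<^sup>2 < ?d\<^sup>2 + e\<^sup>2 / 4) sequentially"
    by (rule order_tendstoD)
  then obtain M where M: "\<And>k. k \<ge> M \<Longrightarrow> (norm (x - X k))\<^sup>2 < ?d\<^sup>2 + e\<^sup>2 / 4"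
    unfolding eventually_sequentially by blast
  have "(norm (X m - X n))\<^sup>2 < e\<^sup>2" if "m \<ge> M" "n \<ge> M" for m n
    using norm_diff_sq_le_infdist[OF assms(1,2,2), of m n x] M[OF that(1)] M[OF that(2)]
    by linarith
  then show "\<exists>M. \<forall>m\<ge>M. \<forall>n\<ge>M. norm (X m - X n) < e"
    using \<open>0 < e\<close> by (meson power_less_imp_less_base less_imp_le)
qed

lemma nearest_point_exists:
  fixes x :: "'a::chilbert_space"
  assumes "closed C" "convex C" "C \<noteq> {}"
  obtains z where "z \<in> C" "\<And>n. n \<in> C \<Longrightarrow> norm (x - z) \<le> norm (x - n)"
proof -
  let ?d = "infdist x C"
  have "\<exists>n\<in>C. dist x n < ?d + inverse (real (Suc k))" for k
  proof -
    have "(INF n\<in>C. dist x n) < ?d + inverse (real (Suc k))"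
      using infdist_notempty[OF assms(3)] by simp
    then show ?thesis
      by (subst (asm) cINF_less_iff) (use assms(3) in \<open>auto intro: bdd_belowI2[where m = 0]\<close>)
  qed
  then obtain X where X: "\<And>k. X k \<in> C" "\<And>k. norm (x - X k) < ?d + inverse (real (Suc k))"
    by (metis dist_norm)
  have lim: "(\<lambda>k. norm (x - X k)) \<longlonglongrightarrow> ?d"
  proof (rule real_tendsto_sandwich)
    show "eventually (\<lambda>k. ?d \<le> norm (x - X k)) sequentially"
      using X(1) by (simp add: infdist_le flip: dist_norm)
    show "eventually (\<lambda>k. norm (x - X k) \<le> ?d + inverse (real (Suc k))) sequentially"
      using X(2) by (simp add: less_imp_le)
    show "(\<lambda>k. ?d + inverse (real (Suc k))) \<longlonglongrightarrow> ?d"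
      using tendsto_add[OF tendsto_const LIMSEQ_inverse_real_of_nat] by simp
  qed simp
  obtain z where z: "X \<longlonglongrightarrow> z"
    using minimizing_sequence_Cauchy[OF assms(2) X(1) lim] Cauchy_convergent_iff convergent_def
    by blast
  have "(\<lambda>k. norm (x - X k)) \<longlonglongrightarrow> norm (x - z)"
    by (intro tendsto_intros z)
  then have "norm (x - z) = ?d" using lim by (rule LIMSEQ_unique)
  moreover have "z \<in> C" using closed_sequentially[OF assms(1) X(1) z] .
  ultimately show ?thesis using that by (metis dist_norm infdist_le)
qed

lemma nearest_point_orthogonal:
  fixes x z :: "'a::chilbert_space"
  assumes add: "\<And>n m. n \<in> N \<Longrightarrow> m \<in> N \<Longrightarrow> n + m \<in> N"
    and scale: "\<And>c n. n \<in> N \<Longrightarrow> scaleC c n \<in> N"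
    and "z \<in> N" and nearest: "\<And>n. n \<in> N \<Longrightarrow> norm (x - z) \<le> norm (x - n)"
    and "n \<in> N"
  shows "cinner (x - z) n = 0"
proof -
  define a where "a = cinner (x - z) n"
  define u where "u = scaleC (cnj a) n"
  define s where "s = inverse ((norm n)\<^sup>2 + 1)"
  have s: "0 < s" "s * (norm n)\<^sup>2 < 1"
    unfolding s_def by (simp_all add: add_pos_nonneg field_simps)
  have "z + scaleR s u \<in> N"
    unfolding u_def scaleR_scaleC scaleC_scaleC using assms by blast
  then have "norm (x - z) \<le> norm ((x - z) - scaleR s u)"
    using nearest by (simp add: diff_diff_eq)
  then have "(norm (x - z))\<^sup>2 \<le> (norm ((x - z) - scaleR s u))\<^sup>2"
    by (rule power_mono) simp
  also have "\<dots> = (norm (x - z))\<^sup>2 + s\<^sup>2 * ((cmod a)\<^sup>2 * (norm n)\<^sup>2) - 2 * s * (cmod a)\<^sup>2"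
  proof -
    have "cinner (x - z) u = complex_of_real ((cmod a)\<^sup>2)"
      unfolding u_def a_def using complex_norm_square[of "cinner (x - z) n"]
      by (simp add: cinner_scaleC_right mult.commute)
    moreover have "(norm u)\<^sup>2 = (cmod a)\<^sup>2 * (norm n)\<^sup>2"
      unfolding u_def by (simp add: norm_scaleC power_mult_distrib)
    ultimately show ?thesis
      using s(1) by (simp add: norm_diff_sq cinner_scaleR_right power_mult_distrib)
  qed
  finally have "s * (2 * (cmod a)\<^sup>2) \<le> s * ((s * (norm n)\<^sup>2) * (cmod a)\<^sup>2)"
    by (simp add: power2_eq_square algebra_simps)
  then have "2 * (cmod a)\<^sup>2 \<le> (s * (norm n)\<^sup>2) * (cmod a)\<^sup>2"
    using s(1) by simp
  also have "\<dots> \<le> (cmod a)\<^sup>2"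
    using s by (intro mult_left_le_one_le) auto
  finally show ?thesis unfolding a_def by simp
qed

lemma riesz_representation:
  fixes \<phi> :: "'a::chilbert_space \<Rightarrow> complex"
  assumes "bounded_linear \<phi>" and scale: "\<And>c x. \<phi> (scaleC c x) = c * \<phi> x"
  obtains v where "\<And>x. \<phi> x = cinner v x"
proof (cases "\<forall>x. \<phi> x = 0")
  case True
  then show ?thesis using that[of 0] by simp
next
  case False
  then obtain x where x: "\<phi> x \<noteq> 0" by blast
  interpret \<phi>: bounded_linear \<phi> by fact
  define N where "N = {x. \<phi> x = 0}"
  have "closed N"
    unfolding N_def by (intro closed_Collect_eq continuous_intros \<phi>.continuous_on)
  moreover have "convex N"
    unfolding N_def convex_def by (simp add: \<phi>.add \<phi>.scaleR)
  moreover have "0 \<in> N" unfolding N_def by (simp add: \<phi>.zero)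
  ultimately obtain z where z: "z \<in> N" "\<And>n. n \<in> N \<Longrightarrow> norm (x - z) \<le> norm (x - n)"
    using nearest_point_exists by blast
  define w where "w = x - z"
  have orth: "cinner w n = 0" if "n \<in> N" for n
    unfolding w_def
    by (rule nearest_point_orthogonal[OF _ _ z that]) (simp_all add: N_def \<phi>.add scale)
  have \<phi>w: "\<phi> w = \<phi> x" using z(1) unfolding w_def N_def by (simp add: \<phi>.diff)
  have "\<phi> y = cinner (scaleC (cnj (\<phi> w) / complex_of_real ((norm w)\<^sup>2)) w) y" for y
  proof -
    have "y - scaleC (\<phi> y / \<phi> w) w \<in> N"
      using x \<phi>w unfolding N_def by (simp add: \<phi>.diff scale)
    then have "cinner w (y - scaleC (\<phi> y / \<phi> w) w) = 0" by (rule orth)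
    then have "cinner w y = (\<phi> y / \<phi> w) * complex_of_real ((norm w)\<^sup>2)"
      by (simp add: cinner_diff_right cinner_scaleC_right cinner_self)
    moreover have "w \<noteq> 0" using x \<phi>w \<phi>.zero by auto
    ultimately show ?thesis using x \<phi>w by (simp add: cinner_scaleC_left field_simps)
  qed
  then show ?thesis by (rule that)
qed

section \<open>Bounded operators and their adjoints\<close>

lemma bounded_opD:
  assumes "bounded_op T"
  shows "T (x + y) = T x + T y" "T (scaleC c x) = scaleC c (T x)"
  using assms unfolding bounded_op_def by auto

lemma bounded_op_bound:
  assumes "bounded_op T"
  obtains K where "K \<ge> 0" "\<And>x. norm (T x) \<le> K * norm x"
proof -
  obtain K where "\<And>x. norm (T x) \<le> K * norm x" using assms unfolding bounded_op_def by blast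
  then have "norm (T x) \<le> max K 0 * norm x" for x
    by (meson max.cobounded1 mult_right_mono norm_ge_zero order_trans)
  then show ?thesis using that[of "max K 0"] by simp
qed

lemma bounded_op_bounded_linear:
  assumes "bounded_op T"
  shows "bounded_linear T"
proof -
  obtain K where "\<And>x. norm (T x) \<le> K * norm x" using bounded_op_bound[OF assms] by blast
  then show ?thesis
    by (intro bounded_linear_intro[where K = K])
       (simp_all add: bounded_opD[OF assms] scaleR_scaleC mult.commute)
qed

lemma bounded_opI:
  assumes "\<And>x y. T (x + y) = T x + T y" "\<And>c x. T (scaleC c x) = scaleC c (T x)"
      and "\<And>x. norm (T x) \<le> K * norm x"
  shows "bounded_op T"
  using assms unfolding bounded_op_def by blast

lemma adjoint_exists:
  fixes T :: "'a::chilbert_space \<Rightarrow> 'a"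
  assumes "bounded_op T"
  obtains S where "\<And>x y. cinner (T x) y = cinner x (S y)"
proof -
  have "\<exists>v. \<forall>x. cinner y (T x) = cinner v x" for y
    by (rule riesz_representation[where \<phi> = "\<lambda>x. cinner y (T x)"])
       (auto intro: bounded_linear_compose[OF bounded_linear_cinner_right bounded_op_bounded_linear]
         simp: assms bounded_opD[OF assms] cinner_scaleC_right)
  then obtain S where "\<And>y x. cinner y (T x) = cinner (S y) x" by metis
  then show ?thesis using that[of S] by (metis cinner_commute)
qed

lemma adj_eqI:
  assumes "\<And>x y. cinner (T x) y = cinner x (S y)"
  shows "adj T = S"
  unfolding adj_def
proof (rule the_equality)
  fix S' assume S': "\<forall>x y. cinner (T x) y = cinner x (S' y)"
  show "S' = S"
  proof
    show "S' y = S y" for y by (rule cinner_eqI) (use S' assms in metis)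
  qed
qed (use assms in blast)

lemma cinner_adj_right:
  assumes "bounded_op T"
  shows "cinner (T x) y = cinner x (adj T y)"
  using adjoint_exists[OF assms] adj_eqI by metis

lemma cinner_adj_left:
  assumes "bounded_op T"
  shows "cinner (adj T y) x = cinner y (T x)"
  by (metis cinner_adj_right[OF assms] cinner_commute)

lemma bounded_op_adj:
  assumes "bounded_op T"
  shows "bounded_op (adj T)"
proof -
  obtain K where K: "K \<ge> 0" "\<And>x. norm (T x) \<le> K * norm x" using bounded_op_bound[OF assms] by blast
  have "norm (adj T y) \<le> K * norm y" for y
  proof -
    have "(norm (adj T y))\<^sup>2 = Re (cinner (T (adj T y)) y)"
      by (simp add: Re_cinner_self cinner_adj_right[OF assms])
    also have "\<dots> \<le> norm (T (adj T y)) * norm y" by (rule Re_cinner_le)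
    also have "\<dots> \<le> K * norm (adj T y) * norm y" using K(2) by (simp add: mult_right_mono)
    finally show ?thesis
      by (cases "adj T y = 0") (use K in \<open>auto simp: power2_eq_square\<close>)
  qed
  moreover have "adj T (x + y) = adj T x + adj T y" for x y
    by (rule cinner_eqI) (simp add: cinner_adj_right[OF assms, symmetric] cinner_add_right)
  moreover have "adj T (scaleC c x) = scaleC c (adj T x)" for c x
    by (rule cinner_eqI) (simp add: cinner_adj_right[OF assms, symmetric] cinner_scaleC_right)
  ultimately show ?thesis by (intro bounded_opI)
qed

lemma adj_comp:
  assumes "bounded_op S" "bounded_op T"
  shows "adj (S \<circ> T) = adj T \<circ> adj S"
  by (rule adj_eqI) (simp add: cinner_adj_right[OF assms(1)] cinner_adj_right[OF assms(2)])

lemma adj_id: "adj id = id"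
  by (rule adj_eqI) simp

section \<open>Unital C*-algebras\<close>

lemma additive_cstar: "Modules.additive (cstar :: 'a::cstar_algebra_1 \<Rightarrow> 'a)"
  by unfold_locales (rule cstar_add)

lemmas cstar_minus = Modules.additive.minus[OF additive_cstar]
lemmas cstar_diff = Modules.additive.diff[OF additive_cstar]

lemma cstar_one [simp]: "cstar (1::'a::cstar_algebra_1) = 1"
  by (metis cstar_cstar cstar_mult mult_1_left)

lemma cstar_scaleR: "cstar (scaleR r x) = scaleR r (cstar (x::'a::cstar_algebra_1))"
  by (simp add: scaleR_scaleC cstar_scaleC)

lemma cstar_power: "cstar (x ^ n) = cstar x ^ n" for x :: "'a::cstar_algebra_1"
proof (induction n)
  case (Suc n)
  then show ?case by (metis cstar_mult power_Suc power_Suc2)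
qed simp

lemma norm_cstar [simp]: "norm (cstar (x::'a::cstar_algebra_1)) = norm x"
proof -
  have le: "norm y \<le> norm (cstar y)" for y :: 'a
  proof (cases "y = 0")
    case False
    have "norm y * norm y = norm (cstar y * y)" by (simp add: cstar_identity power2_eq_square)
    also have "\<dots> \<le> norm (cstar y) * norm y" by (rule norm_mult_ineq)
    finally show ?thesis using False by simp
  qed simp
  show ?thesis using le[of x] le[of "cstar x"] by (simp add: cstar_cstar)
qed

lemma bounded_linear_cstar: "bounded_linear (cstar :: 'a::cstar_algebra_1 \<Rightarrow> 'a)"
  by (rule bounded_linear_intro[where K = 1]) (simp_all add: cstar_add cstar_scaleR)

lemma norm_projection_le_one:
  fixes q :: "'a::cstar_algebra_1"
  assumes "cstar q = q" "q * q = q"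
  shows "norm q \<le> 1"
  using cstar_identity[of q] assms by (cases "q = 0") (simp_all add: power2_eq_square)

lemma norm_le_if_unit_ball_le:
  fixes F :: "'a::real_normed_vector \<Rightarrow> 'b::real_normed_vector"
  assumes hom: "\<And>r x. 0 < r \<Longrightarrow> P x \<Longrightarrow> F (scaleR r x) = scaleR r (F x)"
    and closed: "\<And>r x. 0 < r \<Longrightarrow> P x \<Longrightarrow> P (scaleR r x)"
    and unit: "\<And>x. P x \<Longrightarrow> norm x < 1 \<Longrightarrow> norm (F x) \<le> C"
    and "0 < C" "P a"
  shows "norm (F a) \<le> norm a * C"
proof -
  have "norm (F a) / C \<le> t" if t: "norm a < t" for t
  proof -
    have "0 < t" using t norm_ge_zero[of a] by linarith
    have "norm (scaleR (1 / t) a) < 1" using t \<open>0 < t\<close> by simp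
    then have "norm (F (scaleR (1 / t) a)) \<le> C"
      using \<open>0 < t\<close> \<open>P a\<close> by (intro unit closed) simp_all
    then have "norm (F a) / t \<le> C" using \<open>0 < t\<close> \<open>P a\<close> by (simp add: hom)
    then show ?thesis using \<open>0 < t\<close> \<open>0 < C\<close> by (simp add: divide_le_eq mult.commute)
  qed
  then have "norm (F a) / C \<le> norm a" by (rule dense_ge)
  then show ?thesis using \<open>0 < C\<close> by (simp add: divide_le_eq mult.commute)
qed

text \<open>The Taylor coefficients of \<open>\<surd>(1 - t)\<close>:\<close>

definition sqrt_coeff :: "nat \<Rightarrow> real" where
  "sqrt_coeff n = ((1/2) gchoose n) * (-1) ^ n"

lemma abs_sqrt_coeff_le: "\<bar>sqrt_coeff n\<bar> \<le> 1"
proof -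
  have "\<bar>(1/2::real) gchoose n\<bar> \<le> 1"
  proof (induction n)
    case (Suc k)
    have rec: "(1/2::real) gchoose Suc k = ((1/2) gchoose k) * ((1/2 - real k) / real (Suc k))"
      using gbinomial_mult_1[of "1/2::real" k] by (simp add: field_simps)
    have "\<bar>(1/2 - real k) / real (Suc k)\<bar> \<le> 1" by (simp add: abs_if field_simps)
    then show ?case unfolding rec abs_mult using Suc.IH by (intro mult_le_one) auto
  qed simp
  then show ?thesis by (simp add: sqrt_coeff_def abs_mult power_abs)
qed

lemma sqrt_coeff_convolution:
  "(\<Sum>i\<le>k. sqrt_coeff i * sqrt_coeff (k - i)) = (if k = 0 then 1 else if k = 1 then -1 else 0)"
proof -
  have "(\<Sum>i\<le>k. sqrt_coeff i * sqrt_coeff (k - i))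
        = fps_nth (fps_binomial (1/2) * fps_binomial (1/2::real)) k * (-1) ^ k"
    unfolding sqrt_coeff_def fps_mult_nth atLeast0AtMost sum_distrib_right
    by (intro sum.cong refl) (simp add: power_add[symmetric] algebra_simps)
  also have "fps_binomial (1/2) * fps_binomial (1/2::real) = 1 + fps_X"
    using fps_binomial_add_mult[of "1/2::real" "1/2"] by (simp add: fps_binomial_1)
  finally show ?thesis by (cases k) (auto simp: fps_X_def)
qed

definition sqrt_one_minus :: "'a::{real_normed_algebra_1, banach} \<Rightarrow> 'a" where
  "sqrt_one_minus z = (\<Sum>n. scaleR (sqrt_coeff n) (z ^ n))"

context
  fixes z :: "'a::{real_normed_algebra_1, banach}"
  assumes z: "norm z < 1"
begin

lemma summable_norm_sqrt_one_minus: "summable (\<lambda>n. norm (scaleR (sqrt_coeff n) (z ^ n)))"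
proof (rule summable_comparison_test)
  show "summable (\<lambda>n. norm z ^ n)" using z by (intro summable_geometric) simp
  have "\<bar>sqrt_coeff n\<bar> * norm (z ^ n) \<le> 1 * norm z ^ n" for n
    using abs_sqrt_coeff_le norm_power_ineq by (intro mult_mono) auto
  then show "\<exists>N. \<forall>n\<ge>N. norm (norm (scaleR (sqrt_coeff n) (z ^ n))) \<le> norm z ^ n"
    by simp
qed

lemma summable_sqrt_one_minus: "summable (\<lambda>n. scaleR (sqrt_coeff n) (z ^ n))"
  using summable_norm_cancel[OF summable_norm_sqrt_one_minus] .

lemma sqrt_one_minus_square: "sqrt_one_minus z * sqrt_one_minus z = 1 - z"
proof -
  have "(\<lambda>k. \<Sum>i\<le>k. scaleR (sqrt_coeff i) (z ^ i) * scaleR (sqrt_coeff (k - i)) (z ^ (k - i)))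
        sums (sqrt_one_minus z * sqrt_one_minus z)"
    unfolding sqrt_one_minus_def
    by (rule Cauchy_product_sums[OF summable_norm_sqrt_one_minus summable_norm_sqrt_one_minus])
  moreover have "(\<Sum>i\<le>k. scaleR (sqrt_coeff i) (z ^ i) * scaleR (sqrt_coeff (k - i)) (z ^ (k - i)))
      = (if k = 0 then 1 else 0) + (if k = 1 then - z else 0)" for k
  proof -
    have "(\<Sum>i\<le>k. scaleR (sqrt_coeff i) (z ^ i) * scaleR (sqrt_coeff (k - i)) (z ^ (k - i)))
        = scaleR (\<Sum>i\<le>k. sqrt_coeff i * sqrt_coeff (k - i)) (z ^ k)"
      by (simp add: scaleR_sum_left mult.commute flip: power_add)
    then show ?thesis unfolding sqrt_coeff_convolution by auto
  qed
  moreover have "(\<lambda>k. (if k = 0 then 1 else 0) + (if k = 1 then - z else 0)) sums (1 + - z)"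
    by (intro sums_add) (use sums_single[of 0 "\<lambda>_. 1"] sums_single[of 1 "\<lambda>_. - z"] in simp_all)
  ultimately show ?thesis by (simp add: sums_unique2)
qed

lemma sqrt_one_minus_commute: "y * z = z * y \<Longrightarrow> y * sqrt_one_minus z = sqrt_one_minus z * y"
  unfolding sqrt_one_minus_def
  by (simp add: suminf_mult[OF summable_sqrt_one_minus, symmetric]
      suminf_mult2[OF summable_sqrt_one_minus] power_commuting_commutes)

end

lemma cstar_sqrt_one_minus:
  fixes z :: "'a::cstar_algebra_1"
  assumes "norm z < 1" "cstar z = z"
  shows "cstar (sqrt_one_minus z) = sqrt_one_minus z"
  unfolding sqrt_one_minus_def
  by (simp add: bounded_linear.suminf[OF bounded_linear_cstar summable_sqrt_one_minus[OF assms(1)]]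
      cstar_scaleR cstar_power assms(2))

lemma norm_le_one_if_squares_sum_to_projection:
  fixes w r q :: "'a::cstar_algebra_1"
  assumes w: "cstar w = w" and r: "cstar r = r" and wr: "w * r = r * w"
    and sum: "w * w + r * r = q" and q: "cstar q = q" "q * q = q"
  shows "norm w \<le> 1"
proof -
  define Q where "Q = w + scaleC \<i> r"
  have cstar_Q: "cstar Q = w - scaleC \<i> r"
    unfolding Q_def using w r by (simp add: cstar_add cstar_scaleC)
  have "cstar Q * Q = w * w + scaleC \<i> (w * r) - scaleC \<i> (r * w) - scaleC \<i> (scaleC \<i> (r * r))"
    unfolding cstar_Q unfolding Q_def
    by (simp add: algebra_simps scaleC_left_mult scaleC_right_mult)
  also have "\<dots> = q"
    using wr sum scaleC.scale_minus_left[of 1 "r * r"] by (simp add: scaleC_scaleC scaleC_one)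
  finally have "(norm Q)\<^sup>2 \<le> 1"
    using cstar_identity[of Q] norm_projection_le_one[OF q] by simp
  then have "norm Q \<le> 1" by (simp add: power_le_one_iff)
  have "scaleR 2 w = Q + cstar Q" unfolding cstar_Q unfolding Q_def by (simp add: scaleR_2)
  then have "2 * norm w \<le> norm Q + norm (cstar Q)"
    by (metis norm_scaleR norm_triangle_ineq abs_numeral)
  then show ?thesis using \<open>norm Q \<le> 1\<close> by simp
qed

lemma star_endoD:
  assumes "star_endo \<phi>"
  shows "\<phi> (a + b) = \<phi> a + \<phi> b" "\<phi> (scaleC c a) = scaleC c (\<phi> a)" "\<phi> (a * b) = \<phi> a * \<phi> b"
    "\<phi> (cstar a) = cstar (\<phi> a)"
  using assms unfolding star_endo_def by auto

lemma star_endo_scaleR: "star_endo \<phi> \<Longrightarrow> \<phi> (scaleR r a) = scaleR r (\<phi> a)"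
  by (simp add: scaleR_scaleC star_endoD)

lemma star_endo_one_projection:
  assumes "star_endo \<phi>"
  shows "cstar (\<phi> 1) = \<phi> 1" "\<phi> 1 * \<phi> 1 = \<phi> 1"
  using star_endoD(3,4)[OF assms, of 1] by simp_all

lemma star_endo_norm_le_selfadj:
  fixes z :: "'a::cstar_algebra_1"
  assumes \<phi>: "star_endo \<phi>" and z: "cstar z = z"
  shows "norm (\<phi> z) \<le> norm z"
proof (rule norm_le_if_unit_ball_le[where P = "\<lambda>z. cstar z = z" and C = 1, simplified])
  fix z :: 'a assume z: "cstar z = z" "norm z < 1"
  have zz: "norm (z * z) < 1"
    using norm_mult_ineq[of z z] z(2) mult_strict_mono'[OF z(2) z(2)] by simp
  define t where "t = sqrt_one_minus (z * z)"
  show "norm (\<phi> z) \<le> 1"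
  proof (rule norm_le_one_if_squares_sum_to_projection[OF _ _ _ _ star_endo_one_projection[OF \<phi>]])
    show "cstar (\<phi> z) = \<phi> z" "cstar (\<phi> t) = \<phi> t"
      using z(1) cstar_sqrt_one_minus[OF zz] unfolding t_def
      by (simp_all add: cstar_mult flip: star_endoD(4)[OF \<phi>])
    show "\<phi> z * \<phi> t = \<phi> t * \<phi> z"
      using sqrt_one_minus_commute[OF zz, of z] unfolding t_def
      by (simp add: mult.assoc flip: star_endoD(3)[OF \<phi>])
    have "\<phi> (z * z + t * t) = \<phi> 1"
      unfolding t_def sqrt_one_minus_square[OF zz] by simp
    then show "\<phi> z * \<phi> z + \<phi> t * \<phi> t = \<phi> 1" by (simp add: star_endoD[OF \<phi>])
  qed
qed (simp_all add: star_endo_scaleR[OF \<phi>] cstar_scaleR z)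

lemma star_endo_norm_le:
  assumes \<phi>: "star_endo \<phi>"
  shows "norm (\<phi> a) \<le> norm a"
proof -
  have "(norm (\<phi> a))\<^sup>2 = norm (\<phi> (cstar a * a))"
    by (simp add: cstar_identity star_endoD[OF \<phi>])
  also have "\<dots> \<le> norm (cstar a * a)"
    by (rule star_endo_norm_le_selfadj[OF \<phi>]) (simp add: cstar_mult cstar_cstar)
  also have "\<dots> = (norm a)\<^sup>2" by (rule cstar_identity)
  finally show ?thesis by (rule power2_le_imp_le) simp
qed

lemma is_repD:
  assumes "is_rep \<pi>"
  shows "bounded_op (\<pi> a)" "\<pi> (a + b) h = \<pi> a h + \<pi> b h" "\<pi> (scaleC c a) h = scaleC c (\<pi> a h)"
    "\<pi> (a * b) h = \<pi> a (\<pi> b h)" "\<pi> (cstar a) = adj (\<pi> a)"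
  using assms unfolding is_rep_def by auto

lemma additive_rep: "is_rep \<pi> \<Longrightarrow> Modules.additive (\<lambda>a. \<pi> a h)"
  by unfold_locales (rule is_repD(2))

lemma rep_scaleR: "is_rep \<pi> \<Longrightarrow> \<pi> (scaleR r a) h = scaleR r (\<pi> a h)"
  by (simp add: scaleR_scaleC is_repD(3))

lemma cinner_rep:
  assumes "is_rep \<pi>"
  shows "cinner (\<pi> a x) y = cinner x (\<pi> (cstar a) y)"
  by (simp add: cinner_adj_right[OF is_repD(1)[OF assms]] is_repD(5)[OF assms])

lemma rep_one_eq_id:
  assumes rep: "is_rep \<pi>" and nd: "nondegenerate \<pi>"
  shows "\<pi> 1 = id"
proof -
  interpret P: bounded_linear "\<pi> 1" by (rule bounded_op_bounded_linear[OF is_repD(1)[OF rep]])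
  let ?S = "{\<Sum>i\<in>I. \<pi> (a i) (h i) | I a h. finite (I :: nat set)}"
  have "?S \<subseteq> {x. \<pi> 1 x = x}"
    by (auto simp: P.sum simp flip: is_repD(4)[OF rep])
  moreover have "closed {x. \<pi> 1 x = x}"
    by (intro closed_Collect_eq continuous_intros P.continuous_on)
  ultimately have "closure ?S \<subseteq> {x. \<pi> 1 x = x}" by (rule closure_minimal)
  then show ?thesis using nd unfolding nondegenerate_def by (auto simp: fun_eq_iff)
qed

lemma rep_norm_le:
  assumes rep: "is_rep \<pi>" and one: "\<pi> 1 = id"
  shows "norm (\<pi> a h) \<le> norm a * norm h"
proof (cases "h = 0")
  case True
  then show ?thesis using bounded_opD(2)[OF is_repD(1)[OF rep], of a 0 0] by simp
next
  case False
  show ?thesis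
  proof (rule norm_le_if_unit_ball_le
      [where P = "\<lambda>_. True" and F = "\<lambda>a. \<pi> a h" and C = "norm h", simplified])
    fix b :: 'a assume b: "norm b < 1"
    define z where "z = cstar b * b"
    have z: "norm z < 1" "cstar z = z"
      using b mult_strict_mono'[OF b b] unfolding z_def
      by (simp_all add: cstar_identity power2_eq_square cstar_mult cstar_cstar)
    define s where "s = sqrt_one_minus z"
    have s: "cstar s = s" "\<pi> z h = h - \<pi> s (\<pi> s h)"
      using cstar_sqrt_one_minus[OF z] sqrt_one_minus_square[OF z(1)] one unfolding s_def
      by (simp_all add: Modules.additive.diff[OF additive_rep[OF rep]] flip: is_repD(4)[OF rep])
    have "(norm (\<pi> b h))\<^sup>2 = Re (cinner h (\<pi> z h))"
      using Re_cinner_self[of "\<pi> b h"] by (simp add: cinner_rep[OF rep] z_def is_repD(4)[OF rep])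
    also have "\<dots> = (norm h)\<^sup>2 - (norm (\<pi> s h))\<^sup>2"
      using cinner_rep[OF rep, of s h "\<pi> s h"] Re_cinner_self[of "\<pi> s h"]
      by (simp add: s cinner_diff_right Re_cinner_self)
    finally show "norm (\<pi> b h) \<le> norm h" by (simp add: power2_le_imp_le)
  qed (use False in \<open>simp_all add: rep_scaleR[OF rep]\<close>)
qed

section \<open>Transfer operators\<close>

lemma bounded_linear_if_continuous:
  fixes T :: "'a::real_normed_vector \<Rightarrow> 'b::real_normed_vector"
  assumes "linear T" "continuous_on UNIV T"
  shows "bounded_linear T"
proof -
  interpret T: linear T by fact
  obtain d where d: "d > 0" "\<And>y. dist y 0 < d \<Longrightarrow> dist (T y) (T 0) < 1"
    using assms(2) unfolding continuous_on_iff by (meson UNIV_I zero_less_one)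
  have "norm (T c) \<le> norm c * (2 / d)" for c
  proof (cases "c = 0")
    case False
    define k where "k = d / (2 * norm c)"
    have "0 < k" using d False unfolding k_def by simp
    have "dist (scaleR k c) 0 < d" unfolding k_def using False d by simp
    then have "norm (T (scaleR k c)) < 1" using d(2) by (simp add: T.zero)
    then have "k * norm (T c) < 1" using \<open>0 < k\<close> by (simp add: T.scale)
    then show ?thesis using \<open>0 < k\<close> False d unfolding k_def by (simp add: field_simps)
  qed (simp add: T.zero)
  then show ?thesis by (intro bounded_linear_intro[where K = "2 / d"]) (simp_all add: T.add T.scale)
qed

definition transfer_operator :: "('a::cstar_algebra_1 \<Rightarrow> 'a) \<Rightarrow> ('a \<Rightarrow> 'a) \<Rightarrow> bool" where
  "transfer_operator \<phi> T \<longleftrightarrow> star_endo \<phi>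
     \<and> (\<forall>a b. T (a + b) = T a + T b) \<and> (\<forall>c a. T (scaleC c a) = scaleC c (T a))
     \<and> continuous_on UNIV T
     \<and> (\<forall>a. positive_el a \<longrightarrow> positive_el (T a))
     \<and> (\<forall>a b. T (\<phi> a * b) = a * T b)
     \<and> (\<forall>a. \<phi> (T a) = \<phi> 1 * a * \<phi> 1)"

lemma positive_el_selfadj: "positive_el a \<Longrightarrow> cstar a = a"
  unfolding positive_el_def by (auto simp: cstar_mult cstar_cstar)

lemma selfadj_decomposition:
  fixes c :: "'a::cstar_algebra_1"
  obtains h k where "cstar h = h" "cstar k = k" "c = h + scaleC \<i> k"
proof
  let ?h = "scaleC (1/2) (c + cstar c)" and ?k = "scaleC (- \<i>/2) (c - cstar c)"
  show "cstar ?h = ?h" by (simp add: cstar_scaleC cstar_add cstar_cstar add.commute)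
  show "cstar ?k = ?k"
    by (simp add: cstar_scaleC cstar_diff cstar_cstar flip: scaleC.scale_minus_right)
  have "?h + scaleC \<i> ?k = scaleC (1/2) ((c + cstar c) + (c - cstar c))"
    by (simp add: scaleC_scaleC flip: scaleC_add_right)
  also have "(c + cstar c) + (c - cstar c) = scaleC 2 c"
    using scaleR_2[of c] by (simp add: scaleR_scaleC)
  also have "scaleC (1/2) (scaleC 2 c) = c" by (simp add: scaleC_scaleC scaleC_one)
  finally show "c = ?h + scaleC \<i> ?k" ..
qed

lemma le_one_if_iterated_squares_bounded:
  fixes x B :: real
  assumes "\<And>k. x ^ (2 ^ k) \<le> B"
  shows "x \<le> 1"
proof (rule ccontr)
  assume "\<not> x \<le> 1"
  then obtain n where "B < x ^ n" using real_arch_pow by fastforce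
  also have "\<dots> \<le> x ^ (2 ^ n)"
    using \<open>\<not> x \<le> 1\<close> by (intro power_increasing) (simp_all add: less_imp_le)
  finally show False using assms[of n] by simp
qed

context
  fixes \<phi> T :: "'a::cstar_algebra_1 \<Rightarrow> 'a"
  assumes T: "transfer_operator \<phi> T"
begin

lemma transfer_star_endo: "star_endo \<phi>"
  and transfer_add: "T (a + b) = T a + T b"
  and transfer_scaleC: "T (scaleC c a) = scaleC c (T a)"
  and transfer_positive: "positive_el a \<Longrightarrow> positive_el (T a)"
  and transfer_module: "T (\<phi> a * b) = a * T b"
  and transfer_expectation: "\<phi> (T a) = \<phi> 1 * a * \<phi> 1"
  using T unfolding transfer_operator_def by blast+

lemma transfer_scaleR: "T (scaleR r a) = scaleR r (T a)"
  by (simp add: scaleR_scaleC transfer_scaleC)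

interpretation T: additive T by unfold_locales (rule transfer_add)

lemma transfer_bounded: "bounded_linear T"
  by (rule bounded_linear_if_continuous)
     (use T in \<open>simp_all add: linear_iff transfer_add transfer_scaleR transfer_operator_def\<close>)

lemma transfer_selfadj:
  assumes h: "cstar h = h"
  shows "cstar (T h) = T h"
proof -
  define t where "t = norm h + 1"
  then have "0 < t" by (simp add: add_nonneg_pos)
  define z where "z = scaleR (1/t) h"
  have z: "norm (- z) < 1" "cstar (- z) = - z"
    using \<open>0 < t\<close> h unfolding z_def t_def by (simp_all add: cstar_minus cstar_scaleR field_simps)
  have "1 + z = cstar (sqrt_one_minus (- z)) * sqrt_one_minus (- z)"
    by (simp add: cstar_sqrt_one_minus[OF z] sqrt_one_minus_square[OF z(1)])
  then have "cstar (T (1 + z)) = T (1 + z)" "cstar (T 1) = T 1"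
    using transfer_positive positive_el_selfadj unfolding positive_el_def
    by (metis mult_1_right cstar_one)+
  then have "cstar (T z) = T z" by (simp add: transfer_add cstar_add)
  moreover have "h = scaleR t z" using \<open>0 < t\<close> unfolding z_def by simp
  ultimately show ?thesis by (simp add: transfer_scaleR cstar_scaleR)
qed

lemma transfer_cstar: "T (cstar c) = cstar (T c)"
proof -
  obtain h k where hk: "cstar h = h" "cstar k = k" "c = h + scaleC \<i> k"
    by (rule selfadj_decomposition)
  have "cstar c = h - scaleC \<i> k" using hk by (simp add: cstar_add cstar_scaleC)
  then show ?thesis
    using hk transfer_selfadj[OF hk(1)] transfer_selfadj[OF hk(2)]
    by (simp add: T.diff transfer_add transfer_scaleC cstar_add cstar_scaleC)
qed

lemma transfer_of_endo: "T (\<phi> a) = a * T 1"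
  using transfer_module[of a 1] by simp

lemma transfer_one_central: "a * T 1 = T 1 * a"
proof -
  note S = star_endoD[OF transfer_star_endo]
  have "a * T 1 = T (cstar (\<phi> (cstar a)))" by (simp add: S(4) cstar_cstar transfer_of_endo)
  also have "\<dots> = cstar (cstar a * T 1)" by (simp add: transfer_cstar transfer_of_endo)
  also have "\<dots> = T 1 * a" using transfer_selfadj[of 1] by (simp add: cstar_mult cstar_cstar)
  finally show ?thesis .
qed

lemma transfer_norm_square: "(norm (T c))\<^sup>2 = norm (T (\<phi> 1 * cstar c * \<phi> 1 * c))"
proof -
  have "cstar (T c) * T c = T (\<phi> (T (cstar c)) * c)" by (simp add: transfer_module transfer_cstar)
  then show ?thesis by (simp add: transfer_expectation flip: cstar_identity)
qed

lemma norm_compression_le: "norm (\<phi> 1 * cstar c * \<phi> 1 * c) \<le> (norm c)\<^sup>2"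
proof -
  have \<phi>1: "norm (\<phi> 1) \<le> 1"
    by (rule norm_projection_le_one[OF star_endo_one_projection[OF transfer_star_endo]])
  have \<phi>1_mult: "norm (\<phi> 1 * y) \<le> norm y" "norm (y * \<phi> 1) \<le> norm y" for y
    using norm_mult_ineq[of "\<phi> 1" y] norm_mult_ineq[of y "\<phi> 1"] \<phi>1
      mult_left_le_one_le[of "norm y" "norm (\<phi> 1)"] mult_right_le_one_le[of "norm y" "norm (\<phi> 1)"]
    by simp_all
  have "norm (\<phi> 1 * cstar c * \<phi> 1 * c) \<le> norm (\<phi> 1 * cstar c * \<phi> 1) * norm c"
    by (rule norm_mult_ineq)
  also have "\<dots> \<le> norm c * norm c"
    using \<phi>1_mult(2)[of "\<phi> 1 * cstar c"] \<phi>1_mult(1)[of "cstar c"] by (intro mult_right_mono) auto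
  finally show ?thesis by (simp add: power2_eq_square)
qed

lemma transfer_norm_le: "norm (T c) \<le> norm c"
proof -
  obtain B where B: "0 < B" "\<And>c. norm (T c) \<le> norm c * B"
    using bounded_linear.pos_bounded[OF transfer_bounded] by blast
  have iterate: "norm (T c) ^ (2 ^ k) \<le> norm c ^ (2 ^ k) * B" for k c
  proof (induction k arbitrary: c)
    case (Suc k)
    have "norm (T c) ^ (2 ^ Suc k) = ((norm (T c))\<^sup>2) ^ (2 ^ k)"
      by (simp only: power_Suc power_mult)
    also have "\<dots> = norm (T (\<phi> 1 * cstar c * \<phi> 1 * c)) ^ (2 ^ k)"
      by (simp only: transfer_norm_square)
    also have "\<dots> \<le> norm (\<phi> 1 * cstar c * \<phi> 1 * c) ^ (2 ^ k) * B" by (rule Suc.IH)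
    also have "\<dots> \<le> ((norm c)\<^sup>2) ^ (2 ^ k) * B"
      using B(1) norm_compression_le by (intro mult_right_mono power_mono) auto
    finally show ?case by (simp only: power_Suc power_mult)
  qed (use B(2) in simp)
  show ?thesis
  proof (cases "c = 0")
    case False
    have "(norm (T c) / norm c) ^ (2 ^ k) \<le> B" for k
      using iterate[of c k] False by (simp add: power_divide divide_le_eq mult.commute)
    then have "norm (T c) / norm c \<le> 1" by (rule le_one_if_iterated_squares_bounded)
    then show ?thesis using False by (simp add: divide_le_eq)
  qed (simp add: T.zero)
qed

end

section \<open>Covariant representations\<close>

lemma nonneg_add_iff_neg_le: "0 \<le> x + y \<longleftrightarrow> - x \<le> (y::'g::linordered_ab_group_add)"
  by (metis add.commute diff_ge_0_iff_ge diff_minus_eq_add)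

locale covariant_system =
  fixes \<alpha> :: "'g::linordered_ab_group_add \<Rightarrow> 'a::cstar_algebra_1 \<Rightarrow> 'a"
    and L :: "'g \<Rightarrow> 'a \<Rightarrow> 'a"
    and \<pi> :: "'a \<Rightarrow> 'h::chilbert_space \<Rightarrow> 'h"
    and U :: "'g \<Rightarrow> 'h \<Rightarrow> 'h"
  assumes dyn: "dyn_system \<alpha>"
    and transfer: "complete_transfer_action \<alpha> L"
    and cov: "covariant_rep \<alpha> L \<pi> U"
begin

lemma alpha_star_endo: "0 \<le> x \<Longrightarrow> star_endo (\<alpha> x)"
  using dyn unfolding dyn_system_def by blast

lemma alpha_zero: "\<alpha> 0 a = a"
  using dyn unfolding dyn_system_def by simp

lemma transfer_operator_L: "0 \<le> x \<Longrightarrow> transfer_operator (\<alpha> x) (L x)"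
  using transfer alpha_star_endo unfolding complete_transfer_action_def transfer_operator_def
  by blast

lemma rep: "is_rep \<pi>"
  using cov unfolding covariant_rep_def by blast

lemma rep_one: "\<pi> 1 = id"
  using cov rep_one_eq_id[OF rep] unfolding covariant_rep_def by blast

lemma rep_mult: "\<pi> a (\<pi> b h) = \<pi> (a * b) h"
  by (simp add: is_repD(4)[OF rep])

lemma U_bounded: "0 \<le> x \<Longrightarrow> bounded_op (U x)"
  and U_zero: "U 0 = id"
  and U_add: "0 \<le> x \<Longrightarrow> 0 \<le> y \<Longrightarrow> U (x + y) h = U x (U y h)"
  using cov unfolding covariant_rep_def semigroup_hom_op_def by auto

lemma Uadj_add: "0 \<le> x \<Longrightarrow> 0 \<le> y \<Longrightarrow> adj (U (x + y)) h = adj (U y) (adj (U x) h)"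
  using cov adj_comp[OF U_bounded U_bounded]
  unfolding covariant_rep_def semigroup_hom_op_def by simp

lemma U_conj: "0 \<le> x \<Longrightarrow> U x (\<pi> a (adj (U x) h)) = \<pi> (\<alpha> x a) h"
  and Uadj_conj: "0 \<le> x \<Longrightarrow> adj (U x) (\<pi> a (U x h)) = \<pi> (L x a) h"
  using cov unfolding covariant_rep_def by (metis comp_apply)+

lemma Uadj_U: "0 \<le> x \<Longrightarrow> adj (U x) (U x h) = \<pi> (L x 1) h"
  using Uadj_conj[of x 1 h] by (simp add: rep_one)

lemma U_Uadj: "0 \<le> x \<Longrightarrow> U x (adj (U x) h) = \<pi> (\<alpha> x 1) h"
  using U_conj[of x 1 h] by (simp add: rep_one)

lemma norm_rep_le: "norm (\<pi> a h) \<le> norm a * norm h"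
  by (rule rep_norm_le[OF rep rep_one])

lemma norm_alpha_le: "0 \<le> x \<Longrightarrow> norm (\<alpha> x a) \<le> norm a"
  by (rule star_endo_norm_le[OF alpha_star_endo])

lemma norm_L_le: "0 \<le> x \<Longrightarrow> norm (L x a) \<le> norm a"
  by (rule transfer_norm_le[OF transfer_operator_L])

lemma norm_U_le:
  assumes "0 \<le> x"
  shows "norm (U x h) \<le> norm h"
proof (rule norm_le_if_cinner_self_eq)
  show "cinner (U x h) (U x h) = cinner h (\<pi> (L x 1) h)"
    using assms by (simp add: cinner_adj_right[OF U_bounded] Uadj_U)
  show "norm (\<pi> (L x 1) h) \<le> norm h"
    using norm_rep_le[of "L x 1" h] norm_L_le[OF assms, of 1]
    by (simp add: mult_left_le_one_le order_trans)
qed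

lemma norm_Uadj_le:
  assumes "0 \<le> x"
  shows "norm (adj (U x) h) \<le> norm h"
proof (rule norm_le_if_cinner_self_eq)
  show "cinner (adj (U x) h) (adj (U x) h) = cinner h (\<pi> (\<alpha> x 1) h)"
    using assms by (simp add: cinner_adj_left[OF U_bounded] U_Uadj)
  show "norm (\<pi> (\<alpha> x 1) h) \<le> norm h"
    using norm_rep_le[of "\<alpha> x 1" h] norm_alpha_le[OF assms, of 1]
    by (simp add: mult_left_le_one_le order_trans)
qed

text \<open>\<open>\<pi> (L x 1) = U\<^sub>x\<^sup>* U\<^sub>x\<close> is a projection, and \<open>U\<^sub>x\<close> vanishes on its kernel.\<close>

lemma U_absorbs_initial_projection:
  assumes x: "0 \<le> x"
  shows "U x (\<pi> (L x 1) h) = U x h"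
proof -
  interpret U: bounded_linear "U x" by (rule bounded_op_bounded_linear[OF U_bounded[OF x]])
  interpret P: bounded_linear "\<pi> (L x 1)" by (rule bounded_op_bounded_linear[OF is_repD(1)[OF rep]])
  have idem: "\<pi> (L x 1) (\<pi> (L x 1) k) = \<pi> (L x 1) k" for k
  proof -
    have "\<pi> (L x 1) (\<pi> (L x 1) k) = adj (U x) (U x (adj (U x) (U x k)))"
      using x by (simp add: Uadj_U)
    also have "\<dots> = \<pi> (L x (\<alpha> x 1)) k" using x by (simp add: U_Uadj Uadj_conj)
    finally show ?thesis using transfer_of_endo[OF transfer_operator_L[OF x], of 1] by simp
  qed
  define k where "k = h - \<pi> (L x 1) h"
  have "cinner (U x k) (U x k) = cinner k (\<pi> (L x 1) k)"
    using x by (simp add: cinner_adj_right[OF U_bounded] Uadj_U)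
  also have "\<pi> (L x 1) k = 0" unfolding k_def by (simp add: P.diff idem)
  finally have "U x k = 0" by (simp add: cinner_self)
  then show ?thesis unfolding k_def by (simp add: U.diff)
qed

lemma U_rep_commute:
  assumes x: "0 \<le> x"
  shows "U x (\<pi> a h) = \<pi> (\<alpha> x a) (U x h)"
proof -
  have "\<pi> (\<alpha> x a) (U x h) = U x (\<pi> (a * L x 1) h)"
    using x by (simp add: Uadj_U rep_mult flip: U_conj)
  also have "a * L x 1 = L x 1 * a" by (rule transfer_one_central[OF transfer_operator_L[OF x]])
  finally show ?thesis using x by (simp add: U_absorbs_initial_projection flip: rep_mult)
qed

lemma rep_Uadj_commute:
  assumes x: "0 \<le> x"
  shows "\<pi> a (adj (U x) h) = adj (U x) (\<pi> (\<alpha> x a) h)"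
proof (rule cinner_eqI)
  fix k
  have "cinner k (\<pi> a (adj (U x) h)) = cinner (U x (\<pi> (cstar a) k)) h"
    by (simp add: cinner_adj_right[OF U_bounded[OF x]] cinner_rep[OF rep, of "cstar a"] cstar_cstar)
  also have "\<dots> = cinner k (adj (U x) (\<pi> (\<alpha> x a) h))"
    using x by (simp add: U_rep_commute cinner_rep[OF rep] cinner_adj_right[OF U_bounded]
        star_endoD(4)[OF alpha_star_endo] cstar_cstar)
  finally show "cinner k (\<pi> a (adj (U x) h)) = cinner k (adj (U x) (\<pi> (\<alpha> x a) h))" .
qed

definition delta_op :: "'g \<Rightarrow> 'a \<Rightarrow> 'h \<Rightarrow> 'h" where
  "delta_op g c h = (if 0 \<le> g then \<pi> c (U g h) else adj (U (- g)) (\<pi> c h))"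

text \<open>The coefficient of \<open>\<delta>\<^sub>x\<^sub>+\<^sub>y\<close> in \<open>(c \<delta>\<^sub>x)(d \<delta>\<^sub>y)\<close>, read off from \<^const>\<open>l1_mult\<close>:\<close>

definition delta_coeff :: "'g \<Rightarrow> 'a \<Rightarrow> 'g \<Rightarrow> 'a \<Rightarrow> 'a" where
  "delta_coeff x c y d =
     (if 0 \<le> x \<and> 0 \<le> y then c * \<alpha> x d
      else if x \<le> 0 \<and> y \<le> 0 then \<alpha> (- y) c * d
      else if 0 < x then (if 0 \<le> x + y then c * \<alpha> (x + y) d else \<alpha> (- (x + y)) c * d)
      else L (min (- x) y) (c * d))"

lemma delta_op_nonneg: "0 \<le> g \<Longrightarrow> delta_op g c h = \<pi> c (U g h)"
  by (simp add: delta_op_def)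

lemma delta_op_nonpos: "g \<le> 0 \<Longrightarrow> delta_op g c h = adj (U (- g)) (\<pi> c h)"
  by (cases "g = 0") (simp_all add: delta_op_def U_zero adj_id)

lemma delta_op_mult_nonneg:
  assumes "0 \<le> x" "0 \<le> y"
  shows "delta_op x c (delta_op y d h) = delta_op (x + y) (c * \<alpha> x d) h"
  using assms by (simp add: delta_op_nonneg U_rep_commute U_add rep_mult)

lemma delta_op_mult_nonpos:
  assumes "x \<le> 0" "y \<le> 0"
  shows "delta_op x c (delta_op y d h) = delta_op (x + y) (\<alpha> (- y) c * d) h"
proof -
  have "delta_op x c (delta_op y d h) = adj (U (- x)) (adj (U (- y)) (\<pi> (\<alpha> (- y) c * d) h))"
    using assms by (simp add: delta_op_nonpos rep_Uadj_commute rep_mult)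
  also have "\<dots> = adj (U (- (x + y))) (\<pi> (\<alpha> (- y) c * d) h)"
    using assms Uadj_add[of "- y" "- x"] by (simp add: add.commute)
  finally show ?thesis using assms by (simp add: delta_op_nonpos add_nonpos_nonpos)
qed

lemma delta_op_mult_pos_neg:
  assumes "0 < x" "y < 0" and c: "c * \<alpha> x 1 = c" and d: "\<alpha> (- y) 1 * d = d"
  shows "delta_op x c (delta_op y d h)
    = delta_op (x + y) (if 0 \<le> x + y then c * \<alpha> (x + y) d else \<alpha> (- (x + y)) c * d) h"
proof (cases "0 \<le> x + y")
  case True
  have "U x k = U (x + y) (U (- y) k)" for k
    using U_add[OF True, of "- y"] assms(2) by simp
  then show ?thesis
    using True assms(1,2) d
    by (simp add: delta_op_nonneg delta_op_nonpos U_Uadj U_rep_commute rep_mult)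
next
  case False
  then have "x + y \<le> 0" by simp
  then have "0 \<le> - (x + y)" by (simp only: neg_0_le_iff_le)
  have "delta_op x c (delta_op y d h) = \<pi> c (U x (adj (U (- y)) (\<pi> d h)))"
    using assms(1,2) by (simp add: delta_op_nonneg delta_op_nonpos)
  also have "adj (U (- y)) (\<pi> d h) = adj (U x) (adj (U (- (x + y))) (\<pi> d h))"
    using Uadj_add[OF \<open>0 \<le> - (x + y)\<close>, of x] assms(1) by simp
  also have "\<pi> c (U x \<dots>) = \<pi> c (adj (U (- (x + y))) (\<pi> d h))"
    using assms(1) c by (simp add: U_Uadj rep_mult)
  also have "\<dots> = delta_op (x + y) (\<alpha> (- (x + y)) c * d) h"
    using \<open>x + y \<le> 0\<close> \<open>0 \<le> - (x + y)\<close> by (simp add: delta_op_nonpos rep_Uadj_commute rep_mult)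
  finally show ?thesis using False by simp
qed

lemma delta_op_mult_neg_pos:
  assumes "x < 0" "0 < y"
  shows "delta_op x c (delta_op y d h) = delta_op (x + y) (L (min (- x) y) (c * d)) h"
proof (cases "0 \<le> x + y")
  case True
  have "U y h = U (- x) (U (x + y) h)"
    using U_add[of "- x" "x + y" h] True assms(1) by simp
  then show ?thesis
    using True assms
    by (simp add: delta_op_nonneg delta_op_nonpos rep_mult Uadj_conj min_def nonneg_add_iff_neg_le)
next
  case False
  then have "x + y \<le> 0" by simp
  then have "0 \<le> - (x + y)" by (simp only: neg_0_le_iff_le)
  have "adj (U (- x)) k = adj (U (- (x + y))) (adj (U y) k)" for k
    using Uadj_add[OF _ \<open>0 \<le> - (x + y)\<close>, of y k] assms(2) by simp
  then show ?thesis
    using False \<open>x + y \<le> 0\<close> assms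
    by (simp add: delta_op_nonneg delta_op_nonpos rep_mult Uadj_conj min_def nonneg_add_iff_neg_le)
qed

lemma delta_op_mult:
  assumes "0 < x \<Longrightarrow> c * \<alpha> x 1 = c" "y < 0 \<Longrightarrow> \<alpha> (- y) 1 * d = d"
  shows "delta_op x c (delta_op y d h) = delta_op (x + y) (delta_coeff x c y d) h"
  using assms delta_op_mult_nonneg delta_op_mult_nonpos delta_op_mult_pos_neg delta_op_mult_neg_pos
  unfolding delta_coeff_def by (auto simp: alpha_zero not_le)

lemma norm_delta_coeff_le: "norm (delta_coeff x c y d) \<le> norm c * norm d"
proof -
  have left: "norm (c * \<alpha> z d) \<le> norm c * norm d" and right: "norm (\<alpha> z c * d) \<le> norm c * norm d"
    if "0 \<le> z" for z
    using norm_mult_ineq[of c "\<alpha> z d"] norm_mult_ineq[of "\<alpha> z c" d] norm_alpha_le[OF that]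
    by (meson mult_left_mono mult_right_mono norm_ge_zero order_trans)+
  have mid: "norm (L z (c * d)) \<le> norm c * norm d" if "0 \<le> z" for z
    using norm_L_le[OF that, of "c * d"] norm_mult_ineq[of c d] by linarith
  show ?thesis
    using left[of x] right[of "- y"] left[of "x + y"] right[of "- (x + y)"] mid[of "min (- x) y"]
    by (auto simp: delta_coeff_def not_less not_le nonneg_add_iff_neg_le dest: less_imp_le)
qed

lemma norm_delta_op_le: "norm (delta_op g c h) \<le> norm c * norm h"
proof (cases "0 \<le> g")
  case True
  then show ?thesis
    using norm_rep_le[of c "U g h"] norm_U_le[OF True, of h]
    by (simp add: delta_op_nonneg mult_left_mono order_trans)
next
  case False
  then have "g \<le> 0" by simp
  then show ?thesis
    using norm_rep_le[of c h] norm_Uadj_le[of "- g" "\<pi> c h"] by (simp add: delta_op_nonpos)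
qed

lemma delta_op_bounded: "bounded_op (delta_op g c)"
proof (rule bounded_opI)
  show "delta_op g c (h + k) = delta_op g c h + delta_op g c k" for h k
    by (simp add: delta_op_def bounded_opD U_bounded is_repD(1)[OF rep] bounded_op_adj)
  show "delta_op g c (scaleC z h) = scaleC z (delta_op g c h)" for z h
    by (simp add: delta_op_def bounded_opD U_bounded is_repD(1)[OF rep] bounded_op_adj)
qed (rule norm_delta_op_le)

lemma delta_op_scaleC: "delta_op g (scaleC z c) h = scaleC z (delta_op g c h)"
  by (simp add: delta_op_def is_repD(3)[OF rep] bounded_opD(2) U_bounded bounded_op_adj)

lemma bounded_linear_delta_op_coeff: "bounded_linear (\<lambda>c. delta_op g c h)"
proof (rule bounded_linear_intro[where K = "norm h"])
  show "delta_op g (a + b) h = delta_op g a h + delta_op g b h" for a b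
    by (simp add: delta_op_def is_repD(2)[OF rep] bounded_opD(1) U_bounded bounded_op_adj)
  show "delta_op g (scaleR r a) h = scaleR r (delta_op g a h)" for r a
    by (simp add: scaleR_scaleC delta_op_scaleC)
qed (rule norm_delta_op_le)

lemma cinner_delta_op: "cinner (delta_op g c x) y = cinner x (delta_op (- g) (cstar c) y)"
proof (cases "0 \<le> g")
  case True
  then show ?thesis
    by (simp add: delta_op_nonneg delta_op_nonpos cinner_rep[OF rep] cinner_adj_right[OF U_bounded])
next
  case False
  then have "g \<le> 0" by simp
  then show ?thesis
    by (simp add: delta_op_nonneg delta_op_nonpos cinner_adj_left[OF U_bounded] cinner_rep[OF rep])
qed

end

section \<open>The integrated form\<close>

definition antidiagonal :: "'g::ab_group_add \<Rightarrow> ('g \<times> 'g) set" where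
  "antidiagonal g = {p. fst p + snd p = g}"

text \<open>The three sums on the right are those in the definition of \<^const>\<open>l1_mult\<close>.\<close>

lemma infsum_antidiagonal_split:
  fixes F :: "'g::linordered_ab_group_add \<times> 'g \<Rightarrow> 'b::banach"
  assumes "F summable_on antidiagonal g"
  shows "(\<Sum>\<^sub>\<infinity>p\<in>antidiagonal g. F p) =
      (\<Sum>\<^sub>\<infinity>(x, y)\<in>{(x, y). 0 < x \<and> 0 < y \<and> g = x - y}. F (x, - y))
    + (\<Sum>\<^sub>\<infinity>(x, y)\<in>{(x, y). 0 < x \<and> 0 < y \<and> g = y - x}. F (- x, y))
    + (if 0 \<le> g then \<Sum>\<^sub>\<infinity>(x, y)\<in>{(x, y). 0 \<le> x \<and> 0 \<le> y \<and> g = x + y}. F (x, y)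
       else \<Sum>\<^sub>\<infinity>(x, y)\<in>{(x, y). 0 \<le> x \<and> 0 \<le> y \<and> g = - x - y}. F (- x, - y))"
proof -
  define A1 where "A1 = {p \<in> antidiagonal g. 0 < fst p \<and> snd p < 0}"
  define A2 where "A2 = {p \<in> antidiagonal g. fst p < 0 \<and> 0 < snd p}"
  define A3 where "A3 = antidiagonal g - A1 - A2"
  have summable: "F summable_on A" if "A \<subseteq> antidiagonal g" for A
    using summable_on_subset_banach[OF assms that] .
  have "antidiagonal g = (A1 \<union> A2) \<union> A3" unfolding A3_def A1_def A2_def by blast
  also have "infsum F \<dots> = infsum F (A1 \<union> A2) + infsum F A3"
    by (rule infsum_Un_disjoint) (auto intro: summable simp: A1_def A2_def A3_def)
  also have "infsum F (A1 \<union> A2) = infsum F A1 + infsum F A2"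
    by (rule infsum_Un_disjoint) (auto intro: summable simp: A1_def A2_def)
  finally have "(\<Sum>\<^sub>\<infinity>p\<in>antidiagonal g. F p) = infsum F A1 + infsum F A2 + infsum F A3" .
  moreover have "infsum F A1 = (\<Sum>\<^sub>\<infinity>(x, y)\<in>{(x, y). 0 < x \<and> 0 < y \<and> g = x - y}. F (x, - y))"
    by (rule infsum_reindex_bij_witness[where i = "\<lambda>(x, y). (x, - y)" and j = "\<lambda>(x, y). (x, - y)"])
       (auto simp: A1_def antidiagonal_def)
  moreover have "infsum F A2 = (\<Sum>\<^sub>\<infinity>(x, y)\<in>{(x, y). 0 < x \<and> 0 < y \<and> g = y - x}. F (- x, y))"
    by (rule infsum_reindex_bij_witness[where i = "\<lambda>(x, y). (- x, y)" and j = "\<lambda>(x, y). (- x, y)"])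
       (auto simp: A2_def antidiagonal_def)
  moreover have "infsum F A3 = (\<Sum>\<^sub>\<infinity>(x, y)\<in>{(x, y). 0 \<le> x \<and> 0 \<le> y \<and> g = x + y}. F (x, y))"
    if "0 \<le> g"
    by (rule infsum_reindex_bij_witness[where i = "\<lambda>p. p" and j = "\<lambda>p. p"])
       (use that in \<open>auto simp: A1_def A2_def A3_def antidiagonal_def not_less,
         (metis add_nonpos_eq_0_iff add_nonpos_nonpos antisym)+\<close>)
  moreover have "infsum F A3 = (\<Sum>\<^sub>\<infinity>(x, y)\<in>{(x, y). 0 \<le> x \<and> 0 \<le> y \<and> g = - x - y}. F (- x, - y))"
    if "\<not> 0 \<le> g"
    by (rule infsum_reindex_bij_witness
        [where i = "\<lambda>(x, y). (- x, - y)" and j = "\<lambda>(x, y). (- x, - y)"])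
       (use that in \<open>auto simp: A1_def A2_def A3_def antidiagonal_def not_less\<close>)
  ultimately show ?thesis by simp
qed

lemma summable_on_Sigma_antidiagonal_iff:
  "G summable_on Sigma UNIV antidiagonal \<longleftrightarrow> (\<lambda>p. G (fst p + snd p, p)) summable_on UNIV"
  by (rule summable_on_reindex_bij_witness[where i = "\<lambda>p. (fst p + snd p, p)" and j = snd])
     (auto simp: antidiagonal_def)

lemma infsum_Sigma_antidiagonal:
  "infsum G (Sigma UNIV antidiagonal) = (\<Sum>\<^sub>\<infinity>p. G (fst p + snd p, p))"
  by (rule infsum_reindex_bij_witness[where i = "\<lambda>p. (fst p + snd p, p)" and j = snd])
     (auto simp: antidiagonal_def)

lemma infsum_infsum_antidiagonal:
  fixes F :: "'g::ab_group_add \<times> 'g \<Rightarrow> 'b::banach"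
  assumes "F summable_on UNIV"
  shows "(\<Sum>\<^sub>\<infinity>g. \<Sum>\<^sub>\<infinity>p\<in>antidiagonal g. F p) = (\<Sum>\<^sub>\<infinity>p. F p)"
proof -
  have "(\<lambda>q. F (snd q)) summable_on Sigma UNIV antidiagonal"
    using assms by (simp add: summable_on_Sigma_antidiagonal_iff)
  from infsum_Sigma_banach[OF this]
  have "(\<Sum>\<^sub>\<infinity>g. \<Sum>\<^sub>\<infinity>p\<in>antidiagonal g. F p) = (\<Sum>\<^sub>\<infinity>q\<in>Sigma UNIV antidiagonal. F (snd q))"
    by simp
  also have "\<dots> = (\<Sum>\<^sub>\<infinity>p. F p)" by (simp add: infsum_Sigma_antidiagonal)
  finally show ?thesis .
qed

lemma abs_summable_on_antidiagonal:
  fixes F :: "'g::ab_group_add \<times> 'g \<Rightarrow> 'b::banach"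
  assumes "(\<lambda>p. norm (F p)) summable_on UNIV"
  shows "(\<lambda>g. norm (\<Sum>\<^sub>\<infinity>p\<in>antidiagonal g. F p)) summable_on UNIV"
proof (rule summable_on_comparison_test)
  have "(\<lambda>q. norm (F (snd q))) summable_on Sigma UNIV antidiagonal"
    using assms by (simp add: summable_on_Sigma_antidiagonal_iff)
  from Infinite_Sum.abs_summable_on_Sigma_iff[THEN iffD1, OF this]
  have "(\<lambda>g. norm (\<Sum>\<^sub>\<infinity>p\<in>antidiagonal g. norm (F (snd (g, p))))) summable_on UNIV"
    by (rule conjunct2)
  then show "(\<lambda>g. \<Sum>\<^sub>\<infinity>p\<in>antidiagonal g. norm (F p)) summable_on UNIV"
    by (simp add: infsum_nonneg)
  have "(\<lambda>p. norm (F p)) summable_on antidiagonal g" for g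
    using summable_on_subset_banach[OF assms] by blast
  then show "norm (\<Sum>\<^sub>\<infinity>p\<in>antidiagonal g. F p) \<le> (\<Sum>\<^sub>\<infinity>p\<in>antidiagonal g. norm (F p))" for g
    by (simp add: norm_infsum_bound)
qed simp

lemma abs_summable_on_product:
  fixes a b :: "'i \<Rightarrow> 'b::real_normed_vector"
  assumes "(\<lambda>x. norm (a x)) summable_on UNIV" "(\<lambda>y. norm (b y)) summable_on UNIV"
  shows "(\<lambda>p. norm (a (fst p)) * norm (b (snd p))) summable_on UNIV"
proof -
  have "(\<lambda>(x, y). norm (a x) * norm (b y)) summable_on Sigma UNIV (\<lambda>_. UNIV)"
  proof (rule summable_on_SigmaI[where g = "\<lambda>x. norm (a x) * (\<Sum>\<^sub>\<infinity>y. norm (b y))"])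
    show "((\<lambda>y. case (x, y) of (x, y) \<Rightarrow> norm (a x) * norm (b y)) has_sum
        norm (a x) * (\<Sum>\<^sub>\<infinity>y. norm (b y))) UNIV" for x
      using has_sum_cmult_right[OF has_sum_infsum[OF assms(2)]] by simp
  qed (simp_all add: summable_on_cmult_left assms(1))
  then show ?thesis by (simp add: case_prod_beta')
qed

lemma infsum_bounded_linear:
  assumes "bounded_linear h" "f summable_on A"
  shows "(\<Sum>\<^sub>\<infinity>x\<in>A. h (f x)) = h (\<Sum>\<^sub>\<infinity>x\<in>A. f x)"
  by (rule infsumI[OF has_sum_bounded_linear[OF assms(1) has_sum_infsum[OF assms(2)]]])

context covariant_system
begin

definition delta_series :: "('g \<Rightarrow> 'a) \<Rightarrow> 'h \<Rightarrow> 'h" where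
  "delta_series f h = (\<Sum>\<^sub>\<infinity>g. delta_op g (f g) h)"

lemma summable_norm_delta_op:
  assumes "(\<lambda>g. norm (f g)) summable_on UNIV"
  shows "(\<lambda>g. norm (delta_op g (f g) h)) summable_on A"
proof (rule summable_on_comparison_test)
  show "(\<lambda>g. norm (f g) * norm h) summable_on A"
    using summable_on_subset_banach[OF summable_on_cmult_left[OF assms]] by blast
qed (simp_all add: norm_delta_op_le)

lemma summable_delta_op:
  assumes "(\<lambda>g. norm (f g)) summable_on UNIV"
  shows "(\<lambda>g. delta_op g (f g) h) summable_on A"
  using abs_summable_summable[OF summable_norm_delta_op[OF assms]] .

lemma integrated_form_summable:
  assumes "(\<lambda>g. norm (f g)) summable_on UNIV"
  shows "(\<lambda>x. adj (U x) (\<pi> (f (- x)) h)) summable_on {x. 0 < x}"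
    and "(\<lambda>x. \<pi> (f x) (U x h)) summable_on {x. 0 < x}"
proof -
  have "(\<lambda>g. delta_op g (f g) h) summable_on {g. g < 0}" by (rule summable_delta_op[OF assms])
  then show "(\<lambda>x. adj (U x) (\<pi> (f (- x)) h)) summable_on {x. 0 < x}"
    by (subst summable_on_reindex_bij_witness[where i = uminus and j = uminus, symmetric])
       (auto simp: delta_op_nonpos)
  have "(\<lambda>g. delta_op g (f g) h) summable_on {g. 0 < g}" by (rule summable_delta_op[OF assms])
  then show "(\<lambda>x. \<pi> (f x) (U x h)) summable_on {x. 0 < x}"
    by (rule summable_on_cong[THEN iffD1, rotated]) (simp add: delta_op_nonneg)
qed

lemma integrated_form_eq_delta_series:
  assumes f: "(\<lambda>g. norm (f g)) summable_on UNIV"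
  shows "integrated_form \<pi> U f = delta_series f"
proof
  fix h
  let ?F = "\<lambda>g. delta_op g (f g) h"
  have U: "(UNIV :: 'g set) = ({g. g < 0} \<union> {0}) \<union> {g. 0 < g}" by auto
  have "delta_series f h = infsum ?F ({g. g < 0} \<union> {0}) + infsum ?F {g. 0 < g}"
    unfolding delta_series_def U by (rule infsum_Un_disjoint) (auto intro: summable_delta_op[OF f])
  also have "infsum ?F ({g. g < 0} \<union> {0}) = infsum ?F {g. g < 0} + infsum ?F {0}"
    by (rule infsum_Un_disjoint) (auto intro: summable_delta_op[OF f])
  also have "infsum ?F {g. g < 0} = (\<Sum>\<^sub>\<infinity>x\<in>{x. 0 < x}. adj (U x) (\<pi> (f (- x)) h))"
    by (rule infsum_reindex_bij_witness[where i = uminus and j = uminus])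
       (auto simp: delta_op_nonpos)
  also have "infsum ?F {g. 0 < g} = (\<Sum>\<^sub>\<infinity>x\<in>{x. 0 < x}. \<pi> (f x) (U x h))"
    by (rule infsum_cong) (simp add: delta_op_nonneg)
  finally show "integrated_form \<pi> U f h = delta_series f h"
    by (simp add: integrated_form_def delta_op_nonneg U_zero)
qed

lemma delta_series_bounded:
  assumes f: "(\<lambda>g. norm (f g)) summable_on UNIV"
  shows "bounded_op (delta_series f)"
proof (rule bounded_opI)
  show "delta_series f (h + k) = delta_series f h + delta_series f k" for h k
    unfolding delta_series_def
    by (simp add: bounded_opD(1)[OF delta_op_bounded] infsum_add summable_delta_op[OF f])
  show "delta_series f (scaleC c h) = scaleC c (delta_series f h)" for c h
    unfolding delta_series_def
    by (simp add: bounded_opD(2)[OF delta_op_bounded] summable_delta_op[OF f]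
        flip: infsum_bounded_linear[OF bounded_linear_scaleC])
  show "norm (delta_series f h) \<le> (\<Sum>\<^sub>\<infinity>g. norm (f g)) * norm h" for h
  proof -
    have "norm (delta_series f h) \<le> (\<Sum>\<^sub>\<infinity>g. norm (delta_op g (f g) h))"
      unfolding delta_series_def by (rule norm_infsum_bound[OF summable_norm_delta_op[OF f]])
    also have "\<dots> \<le> (\<Sum>\<^sub>\<infinity>g. norm (f g) * norm h)"
      by (intro infsum_mono summable_norm_delta_op[OF f] summable_on_cmult_left[OF f]
          norm_delta_op_le)
    also have "\<dots> = (\<Sum>\<^sub>\<infinity>g. norm (f g)) * norm h" by (rule infsum_cmult_left[OF f])
    finally show ?thesis .
  qed
qed

lemma delta_series_add:
  assumes "(\<lambda>g. norm (f g)) summable_on UNIV" "(\<lambda>g. norm (f' g)) summable_on UNIV"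
  shows "delta_series (l1_add f f') h = delta_series f h + delta_series f' h"
  unfolding delta_series_def l1_add_def
  using linear_add[OF bounded_linear.linear[OF bounded_linear_delta_op_coeff]]
  by (simp add: infsum_add summable_delta_op assms)

lemma delta_series_scale:
  assumes "(\<lambda>g. norm (f g)) summable_on UNIV"
  shows "delta_series (l1_scale c f) h = scaleC c (delta_series f h)"
  unfolding delta_series_def l1_scale_def
  by (simp add: delta_op_scaleC summable_delta_op[OF assms]
      flip: infsum_bounded_linear[OF bounded_linear_scaleC])

lemma summable_norm_l1_add:
  assumes "(\<lambda>g. norm (f g)) summable_on UNIV" "(\<lambda>g. norm (f' g)) summable_on UNIV"
  shows "(\<lambda>g. norm (l1_add f f' g)) summable_on UNIV"
  by (rule summable_on_comparison_test[OF summable_on_add[OF assms]])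
     (simp_all add: l1_add_def norm_triangle_ineq)

lemma summable_norm_l1_scale:
  assumes "(\<lambda>g. norm (f g)) summable_on UNIV"
  shows "(\<lambda>g. norm (l1_scale c f g)) summable_on UNIV"
  using summable_on_cmult_right[OF assms, of "cmod c"] by (simp add: l1_scale_def norm_scaleC)

lemma summable_norm_l1_star:
  assumes "(\<lambda>g. norm (f g)) summable_on UNIV"
  shows "(\<lambda>g. norm (l1_star f g)) summable_on UNIV"
  using assms unfolding l1_star_def
  by (subst summable_on_reindex_bij_witness[where i = uminus and j = uminus]) auto

lemma adj_delta_series:
  assumes f: "(\<lambda>g. norm (f g)) summable_on UNIV"
  shows "adj (delta_series f) = delta_series (l1_star f)"
proof (rule adj_eqI)
  fix x y
  have "cinner (delta_series f x) y = (\<Sum>\<^sub>\<infinity>g. cinner x (delta_op (- g) (cstar (f g)) y))"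
    unfolding delta_series_def
    by (simp add: cinner_delta_op summable_delta_op[OF f]
        flip: infsum_bounded_linear[OF bounded_linear_cinner_left])
  also have "\<dots> = (\<Sum>\<^sub>\<infinity>g. cinner x (delta_op g (l1_star f g) y))"
    by (rule infsum_reindex_bij_witness[where i = uminus and j = uminus]) (auto simp: l1_star_def)
  also have "\<dots> = cinner x (delta_series (l1_star f) y)"
    unfolding delta_series_def
    by (simp add: summable_delta_op[OF summable_norm_l1_star[OF f]]
        flip: infsum_bounded_linear[OF bounded_linear_cinner_right])
  finally show "cinner (delta_series f x) y = cinner x (delta_series (l1_star f) y)" .
qed

definition product_coeff :: "('g \<Rightarrow> 'a) \<Rightarrow> ('g \<Rightarrow> 'a) \<Rightarrow> 'g \<times> 'g \<Rightarrow> 'a" where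
  "product_coeff a b p = delta_coeff (fst p) (a (fst p)) (snd p) (b (snd p))"

lemma summable_norm_pair_coeff:
  assumes "(\<lambda>g. norm (a g)) summable_on UNIV" "(\<lambda>g. norm (b g)) summable_on UNIV"
  shows "(\<lambda>p. norm (product_coeff a b p)) summable_on A"
proof (rule summable_on_comparison_test)
  show "(\<lambda>p. norm (a (fst p)) * norm (b (snd p))) summable_on A"
    using summable_on_subset_banach[OF abs_summable_on_product[OF assms]] by blast
qed (simp_all add: product_coeff_def norm_delta_coeff_le)

lemma l1_mult_eq_infsum_antidiagonal:
  assumes "(\<lambda>g. norm (a g)) summable_on UNIV" "(\<lambda>g. norm (b g)) summable_on UNIV"
  shows "l1_mult \<alpha> L a b g = (\<Sum>\<^sub>\<infinity>p\<in>antidiagonal g. product_coeff a b p)"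
proof -
  have summable: "product_coeff a b summable_on antidiagonal g"
    by (rule abs_summable_summable[OF summable_norm_pair_coeff[OF assms]])
  show ?thesis
    unfolding infsum_antidiagonal_split[OF summable] l1_mult_def
    by (cases "0 \<le> g")
       (auto intro!: infsum_cong arg_cong2[where f = "(+)"]
         simp: product_coeff_def delta_coeff_def min_def)
qed

lemma summable_norm_l1_mult:
  assumes "(\<lambda>g. norm (a g)) summable_on UNIV" "(\<lambda>g. norm (b g)) summable_on UNIV"
  shows "(\<lambda>g. norm (l1_mult \<alpha> L a b g)) summable_on UNIV"
  unfolding l1_mult_eq_infsum_antidiagonal[OF assms]
  by (rule abs_summable_on_antidiagonal[OF summable_norm_pair_coeff[OF assms]])

lemma l1_set_alpha_one:
  assumes "f \<in> l1_set \<alpha>" "0 \<le> x"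
  shows "f x * \<alpha> x 1 = f x" "\<alpha> x 1 * f (- x) = f (- x)"
proof -
  have idem: "\<alpha> x 1 * \<alpha> x 1 = \<alpha> x 1"
    by (rule star_endo_one_projection(2)[OF alpha_star_endo[OF assms(2)]])
  obtain c d where f: "f x = c * \<alpha> x 1" "f (- x) = \<alpha> x 1 * d"
    using assms unfolding l1_set_def by blast
  show "f x * \<alpha> x 1 = f x" unfolding f(1) by (simp add: idem mult.assoc)
  show "\<alpha> x 1 * f (- x) = f (- x)" unfolding f(2) by (simp add: idem flip: mult.assoc)
qed

lemma delta_series_mult:
  assumes "a \<in> l1_set \<alpha>" "b \<in> l1_set \<alpha>"
  shows "delta_series (l1_mult \<alpha> L a b) h = delta_series a (delta_series b h)"
proof -
  have a: "(\<lambda>g. norm (a g)) summable_on UNIV" and b: "(\<lambda>g. norm (b g)) summable_on UNIV"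
    using assms unfolding l1_set_def by blast+
  have product: "delta_op (fst p + snd p) (product_coeff a b p) h
      = delta_op (fst p) (a (fst p)) (delta_op (snd p) (b (snd p)) h)" for p
    unfolding product_coeff_def
    by (rule delta_op_mult[symmetric])
       (use l1_set_alpha_one(1)[OF assms(1)] l1_set_alpha_one(2)[OF assms(2), of "- snd p"]
         in simp_all)
  have summable: "(\<lambda>p. delta_op (fst p + snd p) (product_coeff a b p) h) summable_on UNIV"
  proof (rule abs_summable_summable, rule summable_on_comparison_test)
    show "(\<lambda>p. norm (product_coeff a b p) * norm h) summable_on UNIV"
      by (rule summable_on_cmult_left[OF summable_norm_pair_coeff[OF a b]])
  qed (simp_all add: norm_delta_op_le)
  have "delta_series (l1_mult \<alpha> L a b) h
      = (\<Sum>\<^sub>\<infinity>g. \<Sum>\<^sub>\<infinity>p\<in>antidiagonal g. delta_op g (product_coeff a b p) h)"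
    unfolding delta_series_def l1_mult_eq_infsum_antidiagonal[OF a b]
    using abs_summable_summable[OF summable_norm_pair_coeff[OF a b]]
    by (intro infsum_cong infsum_bounded_linear[symmetric] bounded_linear_delta_op_coeff)
  also have "\<dots> = (\<Sum>\<^sub>\<infinity>g. \<Sum>\<^sub>\<infinity>p\<in>antidiagonal g. delta_op (fst p + snd p) (product_coeff a b p) h)"
    by (intro infsum_cong) (simp add: antidiagonal_def)
  also have "\<dots> = (\<Sum>\<^sub>\<infinity>p. delta_op (fst p + snd p) (product_coeff a b p) h)"
    by (rule infsum_infsum_antidiagonal[OF summable])
  also have "\<dots> = (\<Sum>\<^sub>\<infinity>p. delta_op (fst p) (a (fst p)) (delta_op (snd p) (b (snd p)) h))"
    by (simp only: product)
  also have "\<dots> = (\<Sum>\<^sub>\<infinity>x. \<Sum>\<^sub>\<infinity>y. delta_op x (a x) (delta_op y (b y) h))"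
    using infsum_Sigma_banach
        [of "\<lambda>p. delta_op (fst p) (a (fst p)) (delta_op (snd p) (b (snd p)) h)" UNIV "\<lambda>_. UNIV"]
      summable by (simp add: product)
  also have "\<dots> = delta_series a (delta_series b h)"
    unfolding delta_series_def
    by (intro infsum_cong infsum_bounded_linear bounded_op_bounded_linear[OF delta_op_bounded]
        summable_delta_op b)
  finally show ?thesis .
qed

end

theorem proposition5p3:
  fixes \<alpha> :: "'g::linordered_ab_group_add \<Rightarrow> 'a::cstar_algebra_1 \<Rightarrow> 'a"
    and L :: "'g \<Rightarrow> 'a \<Rightarrow> 'a"
    and \<pi> :: "'a \<Rightarrow> 'h::chilbert_space \<Rightarrow> 'h"
    and U :: "'g \<Rightarrow> 'h \<Rightarrow> 'h"
  assumes "dyn_system \<alpha>"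
    and "finely_representable TYPE('k::chilbert_space) \<alpha>"
    and "complete_transfer_action \<alpha> L"
    and "covariant_rep \<alpha> L \<pi> U"
  shows "(\<forall>f\<in>l1_set \<alpha>. \<forall>h.
            (\<lambda>x. adj (U x) (\<pi> (f (- x)) h)) summable_on {x. 0 < x}
          \<and> (\<lambda>x. \<pi> (f x) (U x h)) summable_on {x. 0 < x})
       \<and> l1_representation \<alpha> L (integrated_form \<pi> U)"
proof -
  \<comment> \<open>Fine representability only guarantees that \<open>L\<close> exists and is unique; here it is given.\<close>
  interpret covariant_system \<alpha> L \<pi> U using assms(1,3,4) by unfold_locales
  have l1: "(\<lambda>g. norm (f g)) summable_on UNIV" if "f \<in> l1_set \<alpha>" for f
    using that unfolding l1_set_def by blast
  note summable =
    l1 summable_norm_l1_add summable_norm_l1_scale summable_norm_l1_star summable_norm_l1_mult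
  show ?thesis
    unfolding l1_representation_def
    by (simp add: summable integrated_form_summable integrated_form_eq_delta_series
        delta_series_bounded delta_series_add delta_series_scale adj_delta_series delta_series_mult
        fun_eq_iff)
qed

end
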